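(* Let $f$ be a $C^1$ function on $(0,\infty)$ with $f>0$ and $f(1)=1$, and set $\alpha:=f'(1)$. Then for all bounded positive invertible operators $A,B$ on a Hilbert space, $$\lim_{p\to0}P_f(A^p,B^p)^{1/p}=\exp(\alpha\log A+(1-\alpha)\log B)$$ in operator norm.
   Context: $P_f(A,B):=B^{1/2}f(B^{-1/2}AB^{-1/2})B^{1/2}$ for positive invertible $A,B$. The limit is taken as $p\to0$ with $p\neq0$ (both signs). *)

theory Defs
  imports "HOL-Analysis.Analysis" "HOL-Computational_Algebra.Polynomial"
begin

text \<open>Bounded operators on a (real) Hilbert space are elements of the blinfun type.\<close>

definition op_pow :: "('a::real_normed_vector \<Rightarrow>\<^sub>L 'a) \<Rightarrow> nat \<Rightarrow> ('a \<Rightarrow>\<^sub>L 'a)" where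
  "op_pow A n = ((\<lambda>T. A o\<^sub>L T) ^^ n) id_blinfun"

definition op_invertible :: "('a::real_normed_vector \<Rightarrow>\<^sub>L 'a) \<Rightarrow> bool" where
  "op_invertible A \<longleftrightarrow> (\<exists>B. A o\<^sub>L B = id_blinfun \<and> B o\<^sub>L A = id_blinfun)"

definition self_adjoint :: "('a::real_inner \<Rightarrow>\<^sub>L 'a) \<Rightarrow> bool" where
  "self_adjoint A \<longleftrightarrow> (\<forall>x y. inner (A x) y = inner x (A y))"

definition positive_op :: "('a::real_inner \<Rightarrow>\<^sub>L 'a) \<Rightarrow> bool" where
  "positive_op A \<longleftrightarrow> self_adjoint A \<and> (\<forall>x. inner (A x) x \<ge> 0)"

definition op_spectrum :: "('a::real_normed_vector \<Rightarrow>\<^sub>L 'a) \<Rightarrow> real set" where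
  "op_spectrum A = {c. \<not> op_invertible (A - c *\<^sub>R id_blinfun)}"

definition poly_op :: "real poly \<Rightarrow> ('a::real_normed_vector \<Rightarrow>\<^sub>L 'a) \<Rightarrow> ('a \<Rightarrow>\<^sub>L 'a)" where
  "poly_op p A = (\<Sum>i\<le>degree p. coeff p i *\<^sub>R op_pow A i)"

text \<open>Continuous functional calculus for self-adjoint operators: f(A) is the norm limit of
  p_n(A) for any sequence of real polynomials p_n converging to f uniformly on the spectrum of A
  (Weierstrass).\<close>
definition cfc :: "(real \<Rightarrow> real) \<Rightarrow> ('a::{real_inner,complete_space} \<Rightarrow>\<^sub>L 'a) \<Rightarrow> ('a \<Rightarrow>\<^sub>L 'a)" where
  "cfc f A = (THE T. \<forall>p :: nat \<Rightarrow> real poly.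
      (\<forall>e>0. \<forall>\<^sub>F n in sequentially. \<forall>t\<in>op_spectrum A. \<bar>poly (p n) t - f t\<bar> < e)
      \<longrightarrow> (\<lambda>n. poly_op (p n) A) \<longlonglongrightarrow> T)"

definition persp :: "(real \<Rightarrow> real) \<Rightarrow> ('a::{real_inner,complete_space} \<Rightarrow>\<^sub>L 'a) \<Rightarrow> ('a \<Rightarrow>\<^sub>L 'a) \<Rightarrow> ('a \<Rightarrow>\<^sub>L 'a)" where
  "persp f A B = cfc sqrt B o\<^sub>L
     cfc f (cfc (\<lambda>t. t powr (-1/2)) B o\<^sub>L A o\<^sub>L cfc (\<lambda>t. t powr (-1/2)) B) o\<^sub>L cfc sqrt B"

end

theory Submission
  imports Defs "HOL-Computational_Algebra.Fundamental_Theorem_Algebra"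
begin

text \<open>
  Every operator in \<open>P\<^sub>f(A\<^sup>p, B\<^sup>p)\<close> has the form \<open>I + pD + o(p)\<close> as \<open>p \<rightarrow> 0\<close>:
  \<open>A\<^sup>p = exp (p log A) = I + p log A + o(p)\<close> and \<open>B\<^sup>\<plusminus>\<^sup>p\<^sup>/\<^sup>2 = I \<plusminus> (p/2) log B + o(p)\<close>, so the
  product rule gives \<open>B\<^sup>-\<^sup>p\<^sup>/\<^sup>2 A\<^sup>p B\<^sup>-\<^sup>p\<^sup>/\<^sup>2 = I + p (log A - log B) + o(p)\<close>.  Because \<open>f(1) = 1\<close>
  and \<open>f\<close> is differentiable at \<open>1\<close>, the functional calculus linearizes:
  \<open>f(I + pX + o(p)) = I + p\<alpha>X + o(p)\<close>.  Hence \<open>P\<^sub>f(A\<^sup>p, B\<^sup>p) = I + pH + o(p)\<close> with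
  \<open>H = \<alpha> log A + (1 - \<alpha>) log B\<close>; linearizing \<open>log\<close> in the same way gives
  \<open>(1/p) log P\<^sub>f(A\<^sup>p, B\<^sup>p) \<rightarrow> H\<close>, and \<open>P\<^sub>f(A\<^sup>p, B\<^sup>p)\<^sup>1\<^sup>/\<^sup>p = exp ((1/p) log P\<^sub>f(A\<^sup>p, B\<^sup>p)) \<rightarrow> exp H\<close>
  by continuity of \<open>exp\<close> in the operator argument.

  The continuous functional calculus is the norm limit of the polynomial calculus.  What
  makes it work is the bound \<open>\<parallel>q(S)\<parallel> \<le> sup\<^bsub>\<sigma>(S)\<^esub> |q|\<close> for self-adjoint \<open>S\<close>, which combines the
  spectral mapping theorem for polynomials (proved by factoring real polynomials into linear
  and positive definite quadratic factors) with \<open>\<parallel>S\<parallel> \<le> sup\<^bsub>\<sigma>(S)\<^esub> |t|\<close>.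
\<close>

section \<open>Bounded operators\<close>

lemma bounded_linear_pointwise_limit:
  fixes X :: "nat \<Rightarrow> ('a::real_normed_vector \<Rightarrow>\<^sub>L 'b::real_normed_vector)"
  assumes v: "\<And>x. (\<lambda>n. X n x) \<longlonglongrightarrow> v x" and K: "\<And>n. norm (X n) \<le> K"
  shows "bounded_linear v"
proof
  show "v (x + y) = v x + v y" for x y
    using LIMSEQ_unique[OF v[of "x + y"]] tendsto_add[OF v[of x] v[of y]] by (simp add: blinfun.add_right)
  show "v (r *\<^sub>R x) = r *\<^sub>R v x" for r x
    using LIMSEQ_unique[OF v[of "r *\<^sub>R x"]] tendsto_scaleR[OF tendsto_const v[of x]]
    by (simp add: blinfun.scaleR_right)
  have "norm (v x) \<le> K * norm x" for x
  proof (rule tendsto_le[OF _ tendsto_const tendsto_norm[OF v]])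
    have "norm (X n x) \<le> K * norm x" for n
      using norm_blinfun[of "X n" x] mult_right_mono[OF K[of n] norm_ge_zero[of x]] by linarith
    then show "\<forall>\<^sub>F n in sequentially. norm (X n x) \<le> K * norm x" by simp
  qed simp
  then show "\<exists>K. \<forall>x. norm (v x) \<le> norm x * K" by (metis mult.commute)
qed

lemma blinfun_Cauchy_convergent:
  fixes X :: "nat \<Rightarrow> ('a::real_normed_vector \<Rightarrow>\<^sub>L 'b::{real_normed_vector,complete_space})"
  assumes C: "Cauchy X" shows "convergent X"
proof -
  have "\<forall>x. \<exists>l. (\<lambda>n. X n x) \<longlonglongrightarrow> l"
    using bounded_linear.Cauchy[OF blinfun.bounded_linear_left C] Cauchy_convergent
    unfolding convergent_def by blast
  then obtain v where v: "\<And>x. (\<lambda>n. X n x) \<longlonglongrightarrow> v x" by metis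
  obtain K where "\<And>n. norm (X n) \<le> K" using Cauchy_Bseq[OF C] by (auto simp: Bseq_def)
  then have v_apply: "blinfun_apply (Blinfun v) = v"
    using bounded_linear_Blinfun_apply bounded_linear_pointwise_limit[OF v] by blast
  have "X \<longlonglongrightarrow> Blinfun v"
  proof (rule LIMSEQ_I)
    fix e :: real assume e: "e > 0"
    obtain M where M: "\<And>m n. m \<ge> M \<Longrightarrow> n \<ge> M \<Longrightarrow> norm (X m - X n) < e/2"
      using metric_CauchyD[OF C, of "e/2"] e by (auto simp: dist_norm)
    have "norm (X n - Blinfun v) \<le> e/2" if n: "n \<ge> M" for n
    proof (rule norm_blinfun_bound)
      fix x
      have "norm (X n x - v x) \<le> e/2 * norm x"
      proof (rule tendsto_le[OF _ tendsto_const])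
        show "((\<lambda>m. norm (X n x - X m x)) \<longlongrightarrow> norm (X n x - v x)) sequentially"
          by (intro tendsto_intros v)
        have "norm (X n x - X m x) \<le> e/2 * norm x" if "m \<ge> M" for m
          using norm_blinfun[of "X n - X m" x] M[OF n that]
            mult_right_mono[of "norm (X n - X m)" "e/2" "norm x"]
          by (simp add: blinfun.diff_left)
        then show "\<forall>\<^sub>F m in sequentially. norm (X n x - X m x) \<le> e/2 * norm x"
          unfolding eventually_sequentially by blast
      qed simp
      then show "norm ((X n - Blinfun v) x) \<le> e/2 * norm x" by (simp add: blinfun.diff_left v_apply)
    qed (use e in simp)
    then show "\<exists>no. \<forall>n\<ge>no. norm (X n - Blinfun v) < e" using e by force
  qed
  then show ?thesis unfolding convergent_def by blast
qed

lemma summable_blinfun_comparison: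
  fixes f :: "nat \<Rightarrow> ('a::real_normed_vector \<Rightarrow>\<^sub>L 'b::{real_normed_vector,complete_space})"
  assumes "\<And>n. norm (f n) \<le> g n" and "summable g"
  shows "summable f"
proof -
  have "Cauchy (\<lambda>n. \<Sum>i<n. f i)"
  proof (rule metric_CauchyI)
    fix e :: real assume "e > 0"
    then obtain N where N: "\<forall>m\<ge>N. \<forall>n. norm (sum g {m..<n}) < e"
      using assms(2) unfolding summable_Cauchy by blast
    have small: "norm (sum f {m..<n}) < e" if "m \<ge> N" for m n
    proof -
      have "norm (sum f {m..<n}) \<le> sum g {m..<n}"
        using norm_sum[of f "{m..<n}"] sum_mono[of "{m..<n}" "\<lambda>i. norm (f i)" g] assms(1) by simp
      moreover have "sum g {m..<n} < e" using N that by (metis abs_ge_self le_less_trans real_norm_def)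
      ultimately show ?thesis by linarith
    qed
    have "dist (\<Sum>i<m. f i) (\<Sum>i<n. f i) < e" if "m \<ge> N" "n \<ge> N" "m \<le> n" for m n
      using small[OF that(1), of n] sum_diff_nat_ivl[of 0 m n f] that(3)
      by (simp add: atLeast0LessThan dist_norm) (metis norm_minus_commute)
    then show "\<exists>M. \<forall>m\<ge>M. \<forall>n\<ge>M. dist (\<Sum>i<m. f i) (\<Sum>i<n. f i) < e"
      by (metis dist_commute linorder_le_cases)
  qed
  then show ?thesis using blinfun_Cauchy_convergent summable_iff_convergent by blast
qed

lemma blinfun_compose_assoc: "(A o\<^sub>L B) o\<^sub>L C = A o\<^sub>L (B o\<^sub>L C)"
  by (rule blinfun_eqI) simp

lemma blinfun_compose_id [simp]: "A o\<^sub>L id_blinfun = A" "id_blinfun o\<^sub>L A = A"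
  by (auto intro: blinfun_eqI)

lemmas blinfun_compose_add_left = bounded_bilinear.add_left[OF bounded_bilinear_blinfun_compose]
lemmas blinfun_compose_add_right = bounded_bilinear.add_right[OF bounded_bilinear_blinfun_compose]
lemmas blinfun_compose_diff_left = bounded_bilinear.diff_left[OF bounded_bilinear_blinfun_compose]
lemmas blinfun_compose_diff_right = bounded_bilinear.diff_right[OF bounded_bilinear_blinfun_compose]
lemmas blinfun_compose_scaleR_left = bounded_bilinear.scaleR_left[OF bounded_bilinear_blinfun_compose]
lemmas blinfun_compose_scaleR_right = bounded_bilinear.scaleR_right[OF bounded_bilinear_blinfun_compose]
lemmas blinfun_compose_sum_right = bounded_bilinear.sum_right[OF bounded_bilinear_blinfun_compose]
lemmas blinfun_compose_simps = blinfun_compose_add_left blinfun_compose_add_right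
  blinfun_compose_diff_left blinfun_compose_diff_right
  blinfun_compose_scaleR_left blinfun_compose_scaleR_right

lemma op_pow_0 [simp]: "op_pow A 0 = id_blinfun"
  by (simp add: op_pow_def)

lemma op_pow_Suc: "op_pow A (Suc n) = A o\<^sub>L op_pow A n"
  by (simp add: op_pow_def)

lemma op_pow_Suc': "op_pow A (Suc n) = op_pow A n o\<^sub>L A"
proof (induction n)
  case (Suc n)
  have "op_pow A (Suc (Suc n)) = A o\<^sub>L (op_pow A n o\<^sub>L A)" using Suc by (simp add: op_pow_Suc)
  also have "\<dots> = op_pow A (Suc n) o\<^sub>L A" by (simp add: op_pow_Suc blinfun_compose_assoc)
  finally show ?case .
qed (simp add: op_pow_Suc)

lemma norm_op_pow: "norm (op_pow A n) \<le> norm A ^ n"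
proof (induction n)
  case 0 show ?case using norm_blinfun_id_le by simp
next
  case (Suc n)
  have "norm (op_pow A (Suc n)) \<le> norm A * norm (op_pow A n)"
    unfolding op_pow_Suc by (rule norm_blinfun_compose)
  also have "\<dots> \<le> norm A * norm A ^ n" using Suc by (simp add: mult_left_mono)
  finally show ?case by simp
qed

subsection \<open>Invertibility and the spectrum\<close>

lemma op_invertible_id [simp]: "op_invertible id_blinfun"
  unfolding op_invertible_def by (rule exI[of _ id_blinfun]) simp

lemma op_invertible_comp:
  assumes "op_invertible A" "op_invertible B" shows "op_invertible (A o\<^sub>L B)"
proof -
  obtain A' where A': "A o\<^sub>L A' = id_blinfun" "A' o\<^sub>L A = id_blinfun"
    using assms(1) unfolding op_invertible_def by blast
  obtain B' where B': "B o\<^sub>L B' = id_blinfun" "B' o\<^sub>L B = id_blinfun"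
    using assms(2) unfolding op_invertible_def by blast
  have "(A o\<^sub>L B) o\<^sub>L (B' o\<^sub>L A') = A o\<^sub>L ((B o\<^sub>L B') o\<^sub>L A')"
    "(B' o\<^sub>L A') o\<^sub>L (A o\<^sub>L B) = B' o\<^sub>L ((A' o\<^sub>L A) o\<^sub>L B)"
    by (simp_all only: blinfun_compose_assoc)
  then show ?thesis using A' B' unfolding op_invertible_def by auto
qed

lemma op_invertible_scaleR:
  assumes "op_invertible A" "c \<noteq> 0" shows "op_invertible (c *\<^sub>R A)"
proof -
  obtain A' where "A o\<^sub>L A' = id_blinfun" "A' o\<^sub>L A = id_blinfun"
    using assms(1) unfolding op_invertible_def by blast
  then have "(c *\<^sub>R A) o\<^sub>L (inverse c *\<^sub>R A') = id_blinfun" "(inverse c *\<^sub>R A') o\<^sub>L (c *\<^sub>R A) = id_blinfun"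
    using assms(2) by (simp_all add: blinfun_compose_scaleR_left blinfun_compose_scaleR_right)
  then show ?thesis unfolding op_invertible_def by blast
qed

lemma op_invertible_scaleR_iff:
  assumes "c \<noteq> 0" shows "op_invertible (c *\<^sub>R A) \<longleftrightarrow> op_invertible A"
  using op_invertible_scaleR[of "c *\<^sub>R A" "inverse c"] op_invertible_scaleR[of A c] assms by auto

lemma op_invertible_bounded_below:
  assumes "op_invertible A"
  obtains d where "d > 0" "\<And>x. norm (A x) \<ge> d * norm x"
proof -
  obtain A' where A': "A' o\<^sub>L A = id_blinfun" using assms unfolding op_invertible_def by blast
  have "norm x \<le> (norm A' + 1) * norm (A x)" for x
  proof -
    have "norm x = norm (A' (A x))" using A' by (metis blinfun_apply_blinfun_compose blinfun_apply_id_blinfun)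
    also have "\<dots> \<le> norm A' * norm (A x)" by (rule norm_blinfun)
    also have "\<dots> \<le> (norm A' + 1) * norm (A x)" by (simp add: mult_right_mono)
    finally show ?thesis .
  qed
  moreover have "norm A' + 1 > 0" using norm_ge_zero[of A'] by linarith
  ultimately show ?thesis using that[of "inverse (norm A' + 1)"] by (simp add: field_simps)
qed

lemma op_invertible_id_minus:
  fixes U :: "'a::{real_normed_vector,complete_space} \<Rightarrow>\<^sub>L 'a"
  assumes "norm U < 1" shows "op_invertible (id_blinfun - U)"
proof -
  have summable: "summable (op_pow U)"
    by (rule summable_blinfun_comparison[OF norm_op_pow]) (use assms in \<open>simp add: summable_geometric\<close>)
  define S where "S = (\<Sum>n. op_pow U n)"
  have "(\<lambda>n. - op_pow U n) \<longlonglongrightarrow> 0"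
    using tendsto_minus[OF summable_LIMSEQ_zero[OF summable]] by simp
  from telescope_sums[OF this]
  have telescope: "(\<lambda>n. op_pow U n - op_pow U (Suc n)) sums id_blinfun" by simp
  have "(\<lambda>n. (id_blinfun - U) o\<^sub>L op_pow U n) sums ((id_blinfun - U) o\<^sub>L S)"
    "(\<lambda>n. op_pow U n o\<^sub>L (id_blinfun - U)) sums (S o\<^sub>L (id_blinfun - U))"
    unfolding S_def
    by (rule bounded_linear.sums[OF bounded_bilinear.bounded_linear_right[OF bounded_bilinear_blinfun_compose]
          summable_sums[OF summable]],
        rule bounded_linear.sums[OF bounded_bilinear.bounded_linear_left[OF bounded_bilinear_blinfun_compose]
          summable_sums[OF summable]])
  moreover have "(\<lambda>n. (id_blinfun - U) o\<^sub>L op_pow U n) = (\<lambda>n. op_pow U n - op_pow U (Suc n))"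
    by (simp add: blinfun_compose_diff_left op_pow_Suc)
  moreover have "(\<lambda>n. op_pow U n o\<^sub>L (id_blinfun - U)) = (\<lambda>n. op_pow U n - op_pow U (Suc n))"
    by (simp add: blinfun_compose_diff_right op_pow_Suc')
  ultimately have "(id_blinfun - U) o\<^sub>L S = id_blinfun" "S o\<^sub>L (id_blinfun - U) = id_blinfun"
    using sums_unique2[OF _ telescope] by auto
  then show ?thesis unfolding op_invertible_def by blast
qed

lemma op_invertible_add_small:
  fixes A :: "'a::{real_normed_vector,complete_space} \<Rightarrow>\<^sub>L 'a"
  assumes "A o\<^sub>L R = id_blinfun" "R o\<^sub>L A = id_blinfun" "norm R * norm E < 1"
  shows "op_invertible (A + E)"
proof -
  have "A o\<^sub>L (id_blinfun - (- (R o\<^sub>L E))) = A + E"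
    using assms(1) by (simp add: blinfun_compose_add_right flip: blinfun_compose_assoc)
  moreover have "op_invertible (id_blinfun - (- (R o\<^sub>L E)))"
    by (rule op_invertible_id_minus) (use norm_blinfun_compose[of R E] assms(3) in auto)
  moreover have "op_invertible A" using assms unfolding op_invertible_def by blast
  ultimately show ?thesis by (metis op_invertible_comp)
qed

lemma op_spectrum_abs_le_norm:
  fixes T :: "'a::{real_normed_vector,complete_space} \<Rightarrow>\<^sub>L 'a"
  assumes "c \<in> op_spectrum T" shows "\<bar>c\<bar> \<le> norm T"
proof (rule ccontr)
  assume "\<not> ?thesis"
  then have "norm T < \<bar>c\<bar>" "c \<noteq> 0" by auto
  then have c: "norm (inverse c *\<^sub>R T) < 1" "c \<noteq> 0" by (simp_all add: field_simps)
  have "op_invertible ((- c) *\<^sub>R (id_blinfun - inverse c *\<^sub>R T))"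
    using c by (intro op_invertible_scaleR op_invertible_id_minus) auto
  moreover have "(- c) *\<^sub>R (id_blinfun - inverse c *\<^sub>R T) = T - c *\<^sub>R id_blinfun"
    using c by (simp add: algebra_simps)
  ultimately show False using assms unfolding op_spectrum_def by auto
qed

lemma op_spectrum_dist_le_norm:
  fixes T :: "'a::{real_normed_vector,complete_space} \<Rightarrow>\<^sub>L 'a"
  assumes "t \<in> op_spectrum T"
  shows "\<bar>t - a\<bar> \<le> norm (T - a *\<^sub>R id_blinfun)"
proof (rule op_spectrum_abs_le_norm)
  have "(T - a *\<^sub>R id_blinfun) - (t - a) *\<^sub>R id_blinfun = T - t *\<^sub>R id_blinfun"
    by (simp add: algebra_simps)
  then show "t - a \<in> op_spectrum (T - a *\<^sub>R id_blinfun)"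
    using assms unfolding op_spectrum_def mem_Collect_eq by metis
qed

lemma op_spectrum_subset_ball:
  fixes T :: "'a::{real_normed_vector,complete_space} \<Rightarrow>\<^sub>L 'a"
  assumes "norm (T - a *\<^sub>R id_blinfun) < r"
  shows "op_spectrum T \<subseteq> ball a r"
  using op_spectrum_dist_le_norm[of _ T a] assms by (force simp: dist_real_def abs_minus_commute)

lemma closed_op_spectrum:
  fixes T :: "'a::{real_normed_vector,complete_space} \<Rightarrow>\<^sub>L 'a"
  shows "closed (op_spectrum T)"
  unfolding closed_def
proof (rule openI)
  have R1: "norm R + 1 > 0" for R :: "'a \<Rightarrow>\<^sub>L 'a" using norm_ge_zero[of R] by linarith
  fix c0 assume "c0 \<in> - op_spectrum T"
  then obtain R where R: "(T - c0 *\<^sub>R id_blinfun) o\<^sub>L R = id_blinfun" "R o\<^sub>L (T - c0 *\<^sub>R id_blinfun) = id_blinfun"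
    unfolding op_spectrum_def op_invertible_def by auto
  have "op_invertible (T - c *\<^sub>R id_blinfun)" if "\<bar>c0 - c\<bar> < inverse (norm R + 1)" for c
  proof -
    have "norm R * norm ((c0 - c) *\<^sub>R id_blinfun :: 'a \<Rightarrow>\<^sub>L 'a) \<le> norm R * \<bar>c0 - c\<bar>"
      using norm_blinfun_id_le[where 'a='a] by (intro mult_left_mono) (auto simp: mult_left_le)
    also have "\<dots> < 1"
      using that mult_left_mono[of "\<bar>c0 - c\<bar>" "inverse (norm R + 1)" "norm R"] R1[of R]
      by (simp add: field_simps)
    finally have "op_invertible ((T - c0 *\<^sub>R id_blinfun) + (c0 - c) *\<^sub>R id_blinfun)"
      by (rule op_invertible_add_small[OF R])
    then show ?thesis by (simp add: algebra_simps)
  qed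
  then show "\<exists>e>0. ball c0 e \<subseteq> - op_spectrum T"
    by (intro exI[of _ "inverse (norm R + 1)"]) (use R1[of R] in \<open>auto simp: op_spectrum_def dist_real_def\<close>)
qed

lemma compact_op_spectrum:
  fixes T :: "'a::{real_normed_vector,complete_space} \<Rightarrow>\<^sub>L 'a"
  shows "compact (op_spectrum T)"
proof -
  have "op_spectrum T \<subseteq> cball 0 (norm T)" using op_spectrum_abs_le_norm by auto
  then show ?thesis using closed_op_spectrum compact_eq_bounded_closed bounded_subset by blast
qed

lemma op_invertible_trivial_space:
  assumes "(id_blinfun :: 'a::real_normed_vector \<Rightarrow>\<^sub>L 'a) = 0"
  shows "op_invertible (A :: 'a \<Rightarrow>\<^sub>L 'a)"
proof -
  have "A = 0" by (metis assms blinfun_compose_id(1) blinfun_compose_zero(2))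
  then show ?thesis unfolding op_invertible_def using assms by simp
qed

section \<open>Self-adjoint and positive operators\<close>

lemma self_adjoint_apply: "self_adjoint A \<Longrightarrow> A x \<bullet> y = x \<bullet> A y"
  by (simp add: self_adjoint_def)

lemma self_adjoint_id [simp]: "self_adjoint id_blinfun"
  by (simp add: self_adjoint_def)

lemma self_adjoint_add: "self_adjoint A \<Longrightarrow> self_adjoint B \<Longrightarrow> self_adjoint (A + B)"
  by (simp add: self_adjoint_def blinfun.add_left inner_add_left inner_add_right)

lemma self_adjoint_diff: "self_adjoint A \<Longrightarrow> self_adjoint B \<Longrightarrow> self_adjoint (A - B)"
  by (simp add: self_adjoint_def blinfun.diff_left inner_diff_left inner_diff_right)

lemma self_adjoint_scaleR: "self_adjoint A \<Longrightarrow> self_adjoint (c *\<^sub>R A)"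
  by (simp add: self_adjoint_def blinfun.scaleR_left)

lemma self_adjoint_compose:
  assumes "self_adjoint A" "self_adjoint B" "A o\<^sub>L B = B o\<^sub>L A"
  shows "self_adjoint (A o\<^sub>L B)"
  unfolding self_adjoint_def
proof (intro allI)
  fix x y
  have "(A o\<^sub>L B) x \<bullet> y = x \<bullet> B (A y)" using assms(1,2) by (simp add: self_adjoint_apply)
  also have "\<dots> = x \<bullet> (A o\<^sub>L B) y" using assms(3) by (metis blinfun_apply_blinfun_compose)
  finally show "(A o\<^sub>L B) x \<bullet> y = x \<bullet> (A o\<^sub>L B) y" .
qed

lemma self_adjoint_sandwich:
  assumes "self_adjoint A" "self_adjoint B"
  shows "self_adjoint (A o\<^sub>L B o\<^sub>L A)"
  using assms by (simp add: self_adjoint_def self_adjoint_apply)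

lemma self_adjoint_limit:
  fixes X :: "'b \<Rightarrow> ('a::real_inner \<Rightarrow>\<^sub>L 'a)"
  assumes "(X \<longlongrightarrow> T) F" "F \<noteq> bot" "\<forall>\<^sub>F n in F. self_adjoint (X n)"
  shows "self_adjoint T"
  unfolding self_adjoint_def
proof (intro allI)
  fix x y
  have "((\<lambda>n. x \<bullet> X n y) \<longlongrightarrow> x \<bullet> T y) F"
    by (intro tendsto_intros blinfun.tendsto[OF assms(1)])
  moreover have "\<forall>\<^sub>F n in F. X n x \<bullet> y = x \<bullet> X n y"
    using assms(3) by eventually_elim (rule self_adjoint_apply)
  ultimately have "((\<lambda>n. X n x \<bullet> y) \<longlongrightarrow> x \<bullet> T y) F"
    by (rule tendsto_cong[THEN iffD2, rotated])
  moreover have "((\<lambda>n. X n x \<bullet> y) \<longlongrightarrow> T x \<bullet> y) F"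
    by (intro tendsto_intros blinfun.tendsto[OF assms(1)])
  ultimately show "T x \<bullet> y = x \<bullet> T y" using tendsto_unique[OF assms(2)] by metis
qed

lemma abs_inner_blinfun_le: "\<bar>(T::'a::real_inner \<Rightarrow>\<^sub>L 'a) x \<bullet> x\<bar> \<le> norm T * (norm x)\<^sup>2"
proof -
  have "\<bar>T x \<bullet> x\<bar> \<le> norm (T x) * norm x" by (rule Cauchy_Schwarz_ineq2)
  also have "\<dots> \<le> norm T * norm x * norm x" by (intro mult_right_mono norm_blinfun) simp
  finally show ?thesis by (simp add: power2_eq_square mult.assoc)
qed

lemma self_adjoint_polarization:
  assumes "self_adjoint T"
  shows "4 * (T u \<bullet> v) = T (u + v) \<bullet> (u + v) - T (u - v) \<bullet> (u - v)"
proof -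
  have "T v \<bullet> u = T u \<bullet> v" using self_adjoint_apply[OF assms, of v u] by (simp add: inner_commute)
  then show ?thesis by (simp add: blinfun.bilinear_simps inner_add_left inner_add_right
        inner_diff_left inner_diff_right)
qed

lemma norm_self_adjoint_le_numerical_bound:
  fixes T :: "'a::real_inner \<Rightarrow>\<^sub>L 'a"
  assumes sa: "self_adjoint T" and K: "K \<ge> 0" and b: "\<And>x. \<bar>T x \<bullet> x\<bar> \<le> K * (norm x)\<^sup>2"
  shows "norm T \<le> K"
proof (rule norm_blinfun_bound[OF K])
  have polarized: "4 * \<bar>T u \<bullet> v\<bar> \<le> 2 * K * ((norm u)\<^sup>2 + (norm v)\<^sup>2)" for u v
  proof -
    have "4 * \<bar>T u \<bullet> v\<bar> \<le> \<bar>T (u + v) \<bullet> (u + v)\<bar> + \<bar>T (u - v) \<bullet> (u - v)\<bar>"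
      using self_adjoint_polarization[OF sa, of u v] by simp
    also have "\<dots> \<le> K * ((norm (u + v))\<^sup>2 + (norm (u - v))\<^sup>2)"
      using b[of "u + v"] b[of "u - v"] by (simp add: distrib_left)
    also have "(norm (u + v))\<^sup>2 + (norm (u - v))\<^sup>2 = 2 * (norm u)\<^sup>2 + 2 * (norm v)\<^sup>2"
      by (simp add: power2_norm_eq_inner inner_add_left inner_add_right inner_diff_left
          inner_diff_right inner_commute)
    finally show ?thesis by (simp add: algebra_simps)
  qed
  fix x
  show "norm (T x) \<le> K * norm x"
  proof (cases "T x = 0 \<or> x = 0")
    case True
    then show ?thesis using K by auto
  next
    case False
    then have pos: "norm (T x) > 0" "norm x > 0" by auto
    \<comment> \<open>take \<open>u = \<parallel>Tx\<parallel> x\<close> and \<open>v = \<parallel>x\<parallel> Tx\<close>, which have equal norms\<close>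
    have "4 * (norm (T x) * norm x * (norm (T x))\<^sup>2)
        \<le> 2 * K * ((norm (norm (T x) *\<^sub>R x))\<^sup>2 + (norm (norm x *\<^sub>R T x))\<^sup>2)"
      using polarized[of "norm (T x) *\<^sub>R x" "norm x *\<^sub>R T x"] pos
      by (simp add: blinfun.scaleR_right power2_norm_eq_inner)
    then have "(norm (T x) * norm x * norm (T x)) * (4 * norm (T x))
        \<le> (norm (T x) * norm x * norm (T x)) * (4 * (K * norm x))"
      by (simp add: power2_eq_square algebra_simps)
    then show ?thesis using pos by (subst (asm) mult_le_cancel_left_pos) auto
  qed
qed

lemma op_invertible_coercive:
  fixes T :: "'a::{real_inner,complete_space} \<Rightarrow>\<^sub>L 'a"
  assumes sa: "self_adjoint T" and c: "c > 0" and coercive: "\<And>x. c * (norm x)\<^sup>2 \<le> T x \<bullet> x"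
  shows "op_invertible T"
proof -
  define k where "k = norm T + c"
  have k: "k > 0" "c \<le> k" unfolding k_def using c norm_ge_zero[of T] by linarith+
  define U where "U = id_blinfun - inverse k *\<^sub>R T"
  have "norm U \<le> 1 - c / k"
  proof (rule norm_self_adjoint_le_numerical_bound)
    show "self_adjoint U" unfolding U_def by (intro self_adjoint_diff self_adjoint_scaleR sa) simp
    show "0 \<le> 1 - c / k" using k by simp
    fix x
    have Ux: "U x \<bullet> x = (norm x)\<^sup>2 - (T x \<bullet> x) / k"
      by (simp add: U_def blinfun.bilinear_simps inner_diff_left power2_norm_eq_inner
          divide_inverse mult.commute)
    have "T x \<bullet> x \<le> norm T * (norm x)\<^sup>2" using abs_inner_blinfun_le[of T x] by simp
    also have "\<dots> \<le> k * (norm x)\<^sup>2" using c by (intro mult_right_mono) (auto simp: k_def)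
    finally have "(T x \<bullet> x) / k \<le> (norm x)\<^sup>2" using k by (simp add: pos_divide_le_eq mult.commute)
    moreover have "c * (norm x)\<^sup>2 / k \<le> (T x \<bullet> x) / k" using coercive k by (simp add: divide_right_mono)
    ultimately show "\<bar>U x \<bullet> x\<bar> \<le> (1 - c / k) * (norm x)\<^sup>2" using Ux by (simp add: algebra_simps)
  qed
  also have "\<dots> < 1" using k c by simp
  finally have "op_invertible (id_blinfun - U)" by (rule op_invertible_id_minus)
  then show ?thesis using op_invertible_scaleR_iff[of "inverse k" T] k by (simp add: U_def)
qed

lemma nonneg_quadratic_discriminant_le:
  fixes a b c :: real
  assumes c: "c \<ge> 0" and nonneg: "\<And>t. 0 \<le> a + 2 * t * b + t\<^sup>2 * c"
  shows "b\<^sup>2 \<le> a * c"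
proof (cases "c = 0")
  case True
  have "b = 0"
  proof (rule ccontr)
    assume b: "b \<noteq> 0"
    have "0 \<le> a + 2 * (- (a + 1) / (2 * b)) * b + (- (a + 1) / (2 * b))\<^sup>2 * c" by (rule nonneg)
    also have "\<dots> = -1" using b True by (simp add: field_simps)
    finally show False by simp
  qed
  then show ?thesis using True by simp
next
  case False
  then have "c > 0" using c by simp
  have "0 \<le> a + 2 * (- b / c) * b + (- b / c)\<^sup>2 * c" by (rule nonneg)
  also have "\<dots> = a - b\<^sup>2 / c" using \<open>c > 0\<close> by (simp add: field_simps power2_eq_square)
  finally show ?thesis using \<open>c > 0\<close> by (simp add: pos_divide_le_eq mult.commute)
qed

lemma positive_op_Cauchy_Schwarz:
  assumes P: "positive_op P"
  shows "(P x \<bullet> y)\<^sup>2 \<le> (P x \<bullet> x) * (P y \<bullet> y)"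
proof (rule nonneg_quadratic_discriminant_le)
  show "0 \<le> P y \<bullet> y" using P by (simp add: positive_op_def)
  fix t :: real
  have "P y \<bullet> x = P x \<bullet> y"
    using P self_adjoint_apply[of P y x] by (simp add: positive_op_def inner_commute)
  moreover have "0 \<le> P (x + t *\<^sub>R y) \<bullet> (x + t *\<^sub>R y)" using P by (simp add: positive_op_def)
  ultimately show "0 \<le> P x \<bullet> x + 2 * t * (P x \<bullet> y) + t\<^sup>2 * (P y \<bullet> y)"
    by (simp add: blinfun.bilinear_simps inner_add_left inner_add_right power2_eq_square algebra_simps)
qed

lemma positive_op_norm_apply_sq_le:
  assumes P: "positive_op P"
  shows "(norm (P x))\<^sup>2 \<le> norm P * (P x \<bullet> x)"
proof (cases "P x = 0")
  case True
  then show ?thesis by simp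
next
  case False
  have "(norm (P x))\<^sup>2 * (norm (P x))\<^sup>2 = (P x \<bullet> P x)\<^sup>2" unfolding power2_norm_eq_inner by (simp add: power2_eq_square)
  also have "\<dots> \<le> (P x \<bullet> x) * (P (P x) \<bullet> P x)" by (rule positive_op_Cauchy_Schwarz[OF P])
  also have "\<dots> \<le> (P x \<bullet> x) * (norm P * (norm (P x))\<^sup>2)"
    using abs_inner_blinfun_le[of P "P x"] P by (intro mult_left_mono) (auto simp: positive_op_def)
  finally have "(norm (P x))\<^sup>2 * (norm (P x))\<^sup>2 \<le> (norm P * (P x \<bullet> x)) * (norm (P x))\<^sup>2"
    by (simp only: ac_simps)
  moreover have "(norm (P x))\<^sup>2 > 0" using False by simp
  ultimately show ?thesis by (metis mult_le_cancel_right_pos)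
qed

lemma positive_op_invertible_coercive:
  assumes P: "positive_op P" and inv: "op_invertible P"
  obtains c where "c > 0" "\<And>x. c * (norm x)\<^sup>2 \<le> P x \<bullet> x"
proof -
  obtain d where d: "d > 0" "\<And>x. norm (P x) \<ge> d * norm x" using op_invertible_bounded_below[OF inv] by blast
  have K: "norm P + 1 > 0" using norm_ge_zero[of P] by linarith
  have "d\<^sup>2 / (norm P + 1) * (norm x)\<^sup>2 \<le> P x \<bullet> x" for x
  proof -
    have "(d * norm x)\<^sup>2 \<le> (norm (P x))\<^sup>2" using d by (intro power_mono) auto
    also have "\<dots> \<le> norm P * (P x \<bullet> x)" by (rule positive_op_norm_apply_sq_le[OF P])
    also have "\<dots> \<le> (norm P + 1) * (P x \<bullet> x)"
      using P by (intro mult_right_mono) (auto simp: positive_op_def)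
    finally show ?thesis using K by (simp add: field_simps power_mult_distrib)
  qed
  then show ?thesis using that[of "d\<^sup>2 / (norm P + 1)"] d K by simp
qed

lemma positive_op_norm_id_minus_plus:
  fixes T :: "'a::real_inner \<Rightarrow>\<^sub>L 'a"
  assumes sa: "self_adjoint T"
  shows "positive_op (norm T *\<^sub>R id_blinfun - T)" "positive_op (norm T *\<^sub>R id_blinfun + T)"
proof -
  have "\<bar>T x \<bullet> x\<bar> \<le> norm T * (x \<bullet> x)" for x
    using abs_inner_blinfun_le[of T x] by (simp add: power2_norm_eq_inner)
  then have "0 \<le> norm T * (x \<bullet> x) - T x \<bullet> x" "0 \<le> norm T * (x \<bullet> x) + T x \<bullet> x" for x
    by (smt (verit))+
  then show "positive_op (norm T *\<^sub>R id_blinfun - T)" "positive_op (norm T *\<^sub>R id_blinfun + T)"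
    by (auto simp: positive_op_def blinfun.bilinear_simps inner_diff_left inner_add_left
        intro!: self_adjoint_diff self_adjoint_add self_adjoint_scaleR sa)
qed

lemma norm_self_adjoint_le_spectral_bound:
  fixes T :: "'a::{real_inner,complete_space} \<Rightarrow>\<^sub>L 'a"
  assumes sa: "self_adjoint T" and "\<beta> \<ge> 0" and spectrum: "\<And>t. t \<in> op_spectrum T \<Longrightarrow> \<bar>t\<bar> \<le> \<beta>"
  shows "norm T \<le> \<beta>"
proof (rule ccontr)
  \<comment> \<open>otherwise \<open>\<parallel>T\<parallel> I - T\<close> and \<open>\<parallel>T\<parallel> I + T\<close> are positive and invertible, hence coercive,
    which pushes the numerical radius of \<open>T\<close> below \<open>\<parallel>T\<parallel>\<close>\<close>
  define K where "K = norm T"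
  assume "\<not> norm T \<le> \<beta>"
  then have K: "K > \<beta>" "K > 0" using \<open>\<beta> \<ge> 0\<close> by (auto simp: K_def)
  have "op_invertible (T - K *\<^sub>R id_blinfun)" "op_invertible (T - (- K) *\<^sub>R id_blinfun)"
    using spectrum[of K] spectrum[of "- K"] K by (auto simp: op_spectrum_def)
  then have "op_invertible (K *\<^sub>R id_blinfun - T)" "op_invertible (K *\<^sub>R id_blinfun + T)"
    using op_invertible_scaleR[of "T - K *\<^sub>R id_blinfun" "-1"] by (simp_all add: algebra_simps)
  then obtain c1 c2 where c: "c1 > 0" "c2 > 0"
    and c1: "\<And>x. c1 * (norm x)\<^sup>2 \<le> (K *\<^sub>R id_blinfun - T) x \<bullet> x"
    and c2: "\<And>x. c2 * (norm x)\<^sup>2 \<le> (K *\<^sub>R id_blinfun + T) x \<bullet> x"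
    using positive_op_invertible_coercive positive_op_norm_id_minus_plus[OF sa] unfolding K_def by metis
  have "\<bar>T x \<bullet> x\<bar> \<le> max 0 (K - min c1 c2) * (norm x)\<^sup>2" for x
  proof -
    have "\<bar>T x \<bullet> x\<bar> \<le> (K - min c1 c2) * (norm x)\<^sup>2"
      using c1[of x] c2[of x] mult_right_mono[of "min c1 c2" c1 "(norm x)\<^sup>2"]
        mult_right_mono[of "min c1 c2" c2 "(norm x)\<^sup>2"]
      by (simp add: blinfun.bilinear_simps inner_diff_left inner_add_left power2_norm_eq_inner
          algebra_simps abs_le_iff)
    then show ?thesis by (smt (verit) mult_right_mono zero_le_power2)
  qed
  then have "norm T \<le> max 0 (K - min c1 c2)"
    by (intro norm_self_adjoint_le_numerical_bound[OF sa]) auto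
  moreover have "max 0 (K - min c1 c2) < K" using K c by auto
  ultimately show False unfolding K_def by linarith
qed

lemma op_spectrum_empty_trivial_space:
  fixes T :: "'a::{real_inner,complete_space} \<Rightarrow>\<^sub>L 'a"
  assumes sa: "self_adjoint T" and empty: "op_spectrum T = {}"
  shows "(id_blinfun :: 'a \<Rightarrow>\<^sub>L 'a) = 0"
proof -
  have "T = 0" using norm_self_adjoint_le_spectral_bound[OF sa, of 0] empty by simp
  moreover have "0 \<notin> op_spectrum T" using empty by simp
  ultimately have "op_invertible (0 :: 'a \<Rightarrow>\<^sub>L 'a)" by (simp add: op_spectrum_def)
  then show ?thesis unfolding op_invertible_def by auto
qed

lemma op_spectrum_positive:
  fixes A :: "'a::{real_inner,complete_space} \<Rightarrow>\<^sub>L 'a"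
  assumes pos: "positive_op A" and inv: "op_invertible A"
  shows "op_spectrum A \<subseteq> {0<..}"
proof
  fix t assume t: "t \<in> op_spectrum A"
  then have "t \<noteq> 0" using inv by (auto simp: op_spectrum_def)
  moreover have False if "t < 0"
  proof -
    have "op_invertible (A - t *\<^sub>R id_blinfun)"
    proof (rule op_invertible_coercive)
      show "self_adjoint (A - t *\<^sub>R id_blinfun)"
        using pos by (intro self_adjoint_diff self_adjoint_scaleR) (auto simp: positive_op_def)
      show "- t > 0" using that by simp
      show "- t * (norm x)\<^sup>2 \<le> (A - t *\<^sub>R id_blinfun) x \<bullet> x" for x
        using pos by (simp add: positive_op_def blinfun.bilinear_simps inner_diff_left power2_norm_eq_inner)
    qed
    then show False using t by (simp add: op_spectrum_def)
  qed
  ultimately show "t \<in> {0<..}" by force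
qed

section \<open>The polynomial functional calculus\<close>

lemma poly_op_eq_sum_atMost:
  assumes "degree p \<le> n"
  shows "poly_op p A = (\<Sum>i\<le>n. coeff p i *\<^sub>R op_pow A i)"
  unfolding poly_op_def
  by (rule sum.mono_neutral_left) (use assms in \<open>auto intro!: coeff_eq_0 simp: not_le\<close>)

lemma poly_op_0 [simp]: "poly_op 0 A = 0"
  by (simp add: poly_op_def)

lemma poly_op_pCons: "poly_op (pCons a p) A = a *\<^sub>R id_blinfun + (A o\<^sub>L poly_op p A)"
proof -
  have "poly_op (pCons a p) A = (\<Sum>i\<le>Suc (degree p). coeff (pCons a p) i *\<^sub>R op_pow A i)"
    by (rule poly_op_eq_sum_atMost) (simp add: degree_pCons_le)
  also have "\<dots> = a *\<^sub>R id_blinfun + (\<Sum>i\<le>degree p. coeff p i *\<^sub>R op_pow A (Suc i))"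
    by (subst sum.atMost_Suc_shift) simp
  also have "(\<Sum>i\<le>degree p. coeff p i *\<^sub>R op_pow A (Suc i)) = A o\<^sub>L poly_op p A"
    by (simp add: poly_op_def blinfun_compose_sum_right blinfun_compose_scaleR_right op_pow_Suc)
  finally show ?thesis .
qed

lemma poly_op_add: "poly_op (p + q) A = poly_op p A + poly_op q A"
proof -
  define n where "n = max (degree p) (degree q)"
  have "poly_op (p + q) A = (\<Sum>i\<le>n. coeff (p + q) i *\<^sub>R op_pow A i)"
    by (rule poly_op_eq_sum_atMost) (simp add: n_def degree_add_le)
  also have "\<dots> = (\<Sum>i\<le>n. coeff p i *\<^sub>R op_pow A i) + (\<Sum>i\<le>n. coeff q i *\<^sub>R op_pow A i)"
    by (simp add: scaleR_add_left sum.distrib)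
  also have "\<dots> = poly_op p A + poly_op q A"
    using poly_op_eq_sum_atMost[of p n A] poly_op_eq_sum_atMost[of q n A] by (simp add: n_def)
  finally show ?thesis .
qed

lemma poly_op_smult: "poly_op (smult c p) A = c *\<^sub>R poly_op p A"
  using poly_op_eq_sum_atMost[of "smult c p" "degree p" A]
  by (simp add: poly_op_def scaleR_sum_right)

lemma poly_op_diff: "poly_op (p - q) A = poly_op p A - poly_op q A"
  using poly_op_add[of p "- q" A] poly_op_smult[of "-1" q A] by simp

lemma poly_op_const: "poly_op [:c:] A = c *\<^sub>R id_blinfun"
  by (simp add: poly_op_pCons)

lemma poly_op_linear: "poly_op [:- x, 1:] A = A - x *\<^sub>R id_blinfun"
  by (simp add: poly_op_pCons)

lemma poly_op_mult: "poly_op (p * q) A = poly_op p A o\<^sub>L poly_op q A"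
proof (induction p)
  case (pCons a p)
  have "poly_op (pCons a p * q) A = a *\<^sub>R poly_op q A + (A o\<^sub>L poly_op (p * q) A)"
    by (simp add: poly_op_add poly_op_smult poly_op_pCons)
  also have "\<dots> = poly_op (pCons a p) A o\<^sub>L poly_op q A"
    by (simp add: pCons.IH poly_op_pCons blinfun_compose_simps blinfun_compose_assoc)
  finally show ?case .
qed simp

lemma poly_op_commute: "poly_op p A o\<^sub>L poly_op q A = poly_op q A o\<^sub>L poly_op p A"
  by (metis poly_op_mult mult.commute)

lemma self_adjoint_poly_op: "self_adjoint A \<Longrightarrow> self_adjoint (poly_op p A)"
proof (induction p)
  case (pCons a p)
  have "A o\<^sub>L poly_op p A = poly_op p A o\<^sub>L A"
    using poly_op_commute[of "[:0, 1:]" A p] by (simp add: poly_op_pCons)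
  then have "self_adjoint (A o\<^sub>L poly_op p A)"
    by (rule self_adjoint_compose[OF pCons.prems pCons.IH[OF pCons.prems]])
  then show ?case unfolding poly_op_pCons by (intro self_adjoint_add self_adjoint_scaleR self_adjoint_id)
qed (simp add: self_adjoint_def)

lemma poly_op_tendsto:
  fixes X :: "'b \<Rightarrow> ('a::real_normed_vector \<Rightarrow>\<^sub>L 'a)"
  assumes "(X \<longlongrightarrow> S) F"
  shows "((\<lambda>n. poly_op q (X n)) \<longlongrightarrow> poly_op q S) F"
proof (induction q)
  case (pCons a q)
  show ?case unfolding poly_op_pCons
    by (intro tendsto_add tendsto_const bounded_bilinear.tendsto[OF bounded_bilinear_blinfun_compose assms pCons.IH])
qed simp

subsection \<open>Factorization of real polynomials\<close>

definition cpoly :: "real poly \<Rightarrow> complex \<Rightarrow> complex" where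
  "cpoly p z = poly (map_poly complex_of_real p) z"

lemma cpoly_add: "cpoly (p + q) z = cpoly p z + cpoly q z"
  unfolding cpoly_def
  by (metis (no_types) poly_add poly_eqI coeff_add coeff_map_poly of_real_0 of_real_add)

lemma cpoly_mult: "cpoly (p * q) z = cpoly p z * cpoly q z"
proof -
  have "map_poly complex_of_real (p * q) = map_poly complex_of_real p * map_poly complex_of_real q"
    by (rule poly_eqI) (simp add: coeff_map_poly coeff_mult)
  then show ?thesis by (simp add: cpoly_def)
qed

lemma cpoly_of_real: "cpoly p (complex_of_real x) = complex_of_real (poly p x)"
  unfolding cpoly_def by (induction p) (auto simp: map_poly_pCons)

lemma cpoly_0 [simp]: "cpoly 0 z = 0"
  by (simp add: cpoly_def)

lemma cpoly_pCons: "cpoly (pCons a p) z = complex_of_real a + z * cpoly p z"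
  by (simp add: cpoly_def map_poly_pCons)

lemma cpoly_root_exists:
  assumes "degree p > 0"
  obtains z where "cpoly p z = 0"
proof -
  have "degree (map_poly complex_of_real p) = degree p" by (rule degree_map_poly) simp
  then have "\<not> constant (poly (map_poly complex_of_real p))"
    using constant_degree[of "map_poly complex_of_real p"] assms by simp
  then show ?thesis using that fundamental_theorem_of_algebra unfolding cpoly_def by blast
qed

lemma degree_le_1_poly_eq:
  fixes m :: "'a::zero poly"
  assumes "degree m \<le> 1" shows "m = [:coeff m 0, coeff m 1:]"
  by (rule poly_eqI) (use assms in \<open>auto simp: coeff_pCons coeff_eq_0 split: nat.splits\<close>)

text \<open>A non-real root \<open>z\<close> gives the factor \<open>(X - z)(X - z\<^sup>*)\<close>, written with \<open>z = a + bi\<close>.\<close>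

lemma real_poly_linear_or_quadratic_factor:
  fixes r :: "real poly"
  assumes "degree r > 0"
  shows "(\<exists>x q. r = [:-x, 1:] * q \<and> poly r x = 0) \<or>
         (\<exists>a b q. b \<noteq> 0 \<and> r = [:a\<^sup>2 + b\<^sup>2, -2 * a, 1:] * q)"
proof -
  obtain z where z: "cpoly r z = 0" using cpoly_root_exists[OF assms] .
  show ?thesis
  proof (cases "Im z = 0")
    case True
    then have "z = complex_of_real (Re z)" by (simp add: complex_eq_iff)
    then have "poly r (Re z) = 0" using z cpoly_of_real[of r "Re z"] by simp
    moreover obtain q where "r = [:- Re z, 1:] * q"
      using poly_eq_0_iff_dvd[of r "Re z"] calculation by (auto elim: dvdE)
    ultimately show ?thesis by blast
  next
    case False
    define Q where "Q = [:(Re z)\<^sup>2 + (Im z)\<^sup>2, -2 * Re z, 1:]"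
    have "cpoly Q z = 0"
      by (simp add: Q_def cpoly_pCons complex_eq_iff power2_eq_square algebra_simps)
    define m where "m = r mod Q"
    have r: "r = r div Q * Q + m" by (simp add: m_def)
    then have "cpoly m z = 0" using z \<open>cpoly Q z = 0\<close> by (metis cpoly_add cpoly_mult add_0 mult_zero_right)
    moreover have "degree m \<le> 1"
      using degree_mod_less[of Q r] by (fastforce simp: m_def Q_def)
    then have m: "m = [:coeff m 0, coeff m 1:]" by (rule degree_le_1_poly_eq)
    ultimately have "complex_of_real (coeff m 0) + z * complex_of_real (coeff m 1) = 0"
      by (metis cpoly_pCons cpoly_def map_poly_0 poly_0 mult_zero_right add_0_right)
    then have "coeff m 1 * Im z = 0" "coeff m 0 + Re z * coeff m 1 = 0"
      by (auto simp: complex_eq_iff)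
    then have "m = 0" using False m by simp
    then have "r = Q * (r div Q)" using r by (simp add: mult.commute)
    then show ?thesis using False unfolding Q_def by blast
  qed
qed

subsection \<open>Spectral mapping and the norm bound\<close>

lemma op_invertible_poly_op_quadratic:
  fixes S :: "'a::{real_inner,complete_space} \<Rightarrow>\<^sub>L 'a"
  assumes sa: "self_adjoint S" and "b \<noteq> 0"
  shows "op_invertible (poly_op [:a\<^sup>2 + b\<^sup>2, - 2 * a, 1:] S)"
proof (rule op_invertible_coercive)
  define L where "L = S - a *\<^sub>R id_blinfun"
  have "[:a\<^sup>2 + b\<^sup>2, - 2 * a, 1:] = [:- a, 1:] * [:- a, 1:] + [:b\<^sup>2:]"
    by (simp add: power2_eq_square)
  then have Q: "poly_op [:a\<^sup>2 + b\<^sup>2, - 2 * a, 1:] S = (L o\<^sub>L L) + b\<^sup>2 *\<^sub>R id_blinfun"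
    by (simp only: poly_op_add poly_op_mult poly_op_linear poly_op_const L_def)
  show "self_adjoint (poly_op [:a\<^sup>2 + b\<^sup>2, - 2 * a, 1:] S)" by (rule self_adjoint_poly_op[OF sa])
  show "0 < b\<^sup>2" using \<open>b \<noteq> 0\<close> by simp
  fix x
  have "self_adjoint L" unfolding L_def by (intro self_adjoint_diff self_adjoint_scaleR sa self_adjoint_id)
  then have "(L o\<^sub>L L) x \<bullet> x = L x \<bullet> L x" by (simp add: self_adjoint_apply)
  then have "(L o\<^sub>L L) x \<bullet> x \<ge> 0" by simp
  then show "b\<^sup>2 * (norm x)\<^sup>2 \<le> poly_op [:a\<^sup>2 + b\<^sup>2, - 2 * a, 1:] S x \<bullet> x"
    unfolding Q by (simp add: blinfun.bilinear_simps inner_add_left power2_norm_eq_inner)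
qed

lemma op_invertible_poly_op:
  fixes S :: "'a::{real_inner,complete_space} \<Rightarrow>\<^sub>L 'a"
  assumes sa: "self_adjoint S" and nonzero: "\<And>t. t \<in> op_spectrum S \<Longrightarrow> poly r t \<noteq> 0"
  shows "op_invertible (poly_op r S)"
  \<comment> \<open>constant factors need a point of the spectrum, which exists unless the space is trivial\<close>
proof (cases "(id_blinfun :: 'a \<Rightarrow>\<^sub>L 'a) = 0")
  case True then show ?thesis by (rule op_invertible_trivial_space)
next
  case False
  then obtain t0 where t0: "t0 \<in> op_spectrum S" using op_spectrum_empty_trivial_space[OF sa] by blast
  show ?thesis using nonzero
  proof (induction "degree r" arbitrary: r rule: less_induct)
    case less
    show ?case
    proof (cases "degree r = 0")
      case True
      then have "r = [:poly r t0:]" by (metis degree_eq_zeroE poly_const_conv)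
      then show ?thesis using less.prems[OF t0] op_invertible_scaleR[OF op_invertible_id]
        by (metis poly_op_const)
    next
      case False
      then have "r \<noteq> 0" by auto
      have IH: "op_invertible (poly_op q S)" if "r = p * q" "degree p > 0" for p q
      proof (rule less.hyps)
        show "degree q < degree r" using that \<open>r \<noteq> 0\<close> by (auto simp: degree_mult_eq)
        show "poly q t \<noteq> 0" if "t \<in> op_spectrum S" for t using less.prems[OF that] \<open>r = p * q\<close> by simp
      qed
      from False have "degree r > 0" by simp
      from real_poly_linear_or_quadratic_factor[OF this] show ?thesis
      proof (elim disjE exE conjE)
        fix x q assume r: "r = [:- x, 1:] * q" and "poly r x = 0"
        then have "x \<notin> op_spectrum S" using less.prems by blast
        then have "op_invertible (poly_op [:- x, 1:] S)" by (simp add: poly_op_linear op_spectrum_def)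
        then show ?thesis unfolding r poly_op_mult using IH[OF r] by (simp add: op_invertible_comp)
      next
        fix a b q assume "b \<noteq> 0" and r: "r = [:a\<^sup>2 + b\<^sup>2, - 2 * a, 1:] * q"
        then show ?thesis unfolding r poly_op_mult
          using op_invertible_comp[OF op_invertible_poly_op_quadratic[OF sa \<open>b \<noteq> 0\<close>] IH[OF r]] by simp
      qed
    qed
  qed
qed

lemma op_spectrum_poly_op:
  fixes S :: "'a::{real_inner,complete_space} \<Rightarrow>\<^sub>L 'a"
  assumes sa: "self_adjoint S" and "l \<in> op_spectrum (poly_op q S)"
  shows "\<exists>t\<in>op_spectrum S. poly q t = l"
proof (rule ccontr)
  assume "\<not> ?thesis"
  then have "op_invertible (poly_op (q - [:l:]) S)" by (intro op_invertible_poly_op[OF sa]) auto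
  then show False using assms(2) by (simp add: op_spectrum_def poly_op_diff poly_op_const)
qed

lemma norm_poly_op_le:
  fixes S :: "'a::{real_inner,complete_space} \<Rightarrow>\<^sub>L 'a"
  assumes sa: "self_adjoint S" and "\<beta> \<ge> 0" and bound: "\<And>t. t \<in> op_spectrum S \<Longrightarrow> \<bar>poly q t\<bar> \<le> \<beta>"
  shows "norm (poly_op q S) \<le> \<beta>"
  using bound op_spectrum_poly_op[OF sa]
  by (intro norm_self_adjoint_le_spectral_bound self_adjoint_poly_op sa \<open>\<beta> \<ge> 0\<close>) blast

section \<open>The continuous functional calculus\<close>

lemma real_polynomial_function_poly:
  fixes g :: "real \<Rightarrow> real"
  assumes "real_polynomial_function g"
  obtains p where "g = poly p"
proof -
  from assms have "\<exists>p. g = poly p"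
  proof (induction g rule: real_polynomial_function.induct)
    case (linear f)
    then obtain c where "f = (\<lambda>x. x * c)" using real_bounded_linear by blast
    then show ?case by (intro exI[of _ "[:0, c:]"]) auto
  next
    case (const c)
    show ?case by (intro exI[of _ "[:c:]"]) auto
  next
    case (add f g)
    then obtain p q where "f = poly p" "g = poly q" by blast
    then show ?case by (intro exI[of _ "p + q"]) auto
  next
    case (mult f g)
    then obtain p q where "f = poly p" "g = poly q" by blast
    then show ?case by (intro exI[of _ "p * q"]) auto
  qed
  then show ?thesis using that by blast
qed

lemma poly_uniform_approx_exists:
  fixes g :: "real \<Rightarrow> real"
  assumes "compact K" "continuous_on K g"
  obtains p where "uniform_limit K (\<lambda>n. poly (p n)) g sequentially"
proof -
  have "\<exists>q. \<forall>t\<in>K. dist (poly q t) (g t) < inverse (Suc n)" for n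
  proof -
    obtain h where h: "real_polynomial_function h" "\<And>x. x \<in> K \<Longrightarrow> \<bar>g x - h x\<bar> < inverse (Suc n)"
      using Stone_Weierstrass_real_polynomial_function[OF assms, of "inverse (Suc n)"] by auto
    obtain q where "h = poly q" using real_polynomial_function_poly[OF h(1)] .
    then show ?thesis using h(2) by (auto simp: dist_real_def abs_minus_commute)
  qed
  then obtain p where p: "\<And>n. \<forall>t\<in>K. dist (poly (p n) t) (g t) < inverse (Suc n)" by metis
  have "uniform_limit K (\<lambda>n. poly (p n)) g sequentially"
  proof (rule uniform_limitI)
    fix e :: real assume "e > 0"
    then obtain N where N: "inverse (Suc N) < e" using reals_Archimedean by blast
    have "inverse (Suc n) < e" if "n \<ge> N" for n
      using N that by (smt (verit) le_imp_inverse_le of_nat_0_less_iff of_nat_mono zero_less_Suc Suc_le_mono)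
    then show "\<forall>\<^sub>F n in sequentially. \<forall>t\<in>K. dist (poly (p n) t) (g t) < e"
      unfolding eventually_sequentially using p by (meson order.strict_trans)
  qed
  then show ?thesis using that by blast
qed

lemma cfc_eq_The:
  "cfc f A = (THE T. \<forall>p. uniform_limit (op_spectrum A) (\<lambda>n. poly (p n)) f sequentially
      \<longrightarrow> (\<lambda>n. poly_op (p n) A) \<longlonglongrightarrow> T)"
  by (simp add: cfc_def uniform_limit_iff dist_real_def)

lemma cfc_cong:
  assumes "\<And>t. t \<in> op_spectrum S \<Longrightarrow> g t = h t"
  shows "cfc g S = cfc h S"
proof -
  have "uniform_limit (op_spectrum S) (\<lambda>n. poly (p n)) g F \<longleftrightarrow>
      uniform_limit (op_spectrum S) (\<lambda>n. poly (p n)) h F" for p :: "nat \<Rightarrow> real poly" and F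
    using assms by (intro uniform_limit_cong') auto
  then show ?thesis unfolding cfc_eq_The by simp
qed

context
  fixes S :: "'a::{real_inner,complete_space} \<Rightarrow>\<^sub>L 'a"
  assumes sa: "self_adjoint S"
begin

lemma norm_poly_op_diff_le:
  assumes "\<forall>t\<in>op_spectrum S. dist (poly p t) (g t) < e" "\<forall>t\<in>op_spectrum S. dist (poly q t) (g t) < e'"
    and "e > 0" "e' > 0"
  shows "norm (poly_op p S - poly_op q S) \<le> e + e'"
proof -
  have "norm (poly_op (p - q) S) \<le> e + e'"
  proof (rule norm_poly_op_le[OF sa])
    show "\<bar>poly (p - q) t\<bar> \<le> e + e'" if "t \<in> op_spectrum S" for t
      using assms that by (fastforce simp: dist_real_def)
  qed (use assms in simp)
  then show ?thesis by (simp add: poly_op_diff)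
qed

lemma cfc_exists:
  assumes g: "continuous_on (op_spectrum S) g"
  shows "\<exists>T. \<forall>p. uniform_limit (op_spectrum S) (\<lambda>n. poly (p n)) g sequentially
      \<longrightarrow> (\<lambda>n. poly_op (p n) S) \<longlonglongrightarrow> T"
proof -
  obtain p0 where p0: "uniform_limit (op_spectrum S) (\<lambda>n. poly (p0 n)) g sequentially"
    using poly_uniform_approx_exists[OF compact_op_spectrum g] .
  have "Cauchy (\<lambda>n. poly_op (p0 n) S)"
  proof (rule metric_CauchyI)
    fix e :: real assume "e > 0"
    then obtain N where N: "\<And>n. n \<ge> N \<Longrightarrow> \<forall>t\<in>op_spectrum S. dist (poly (p0 n) t) (g t) < e/3"
      using uniform_limitD[OF p0, of "e/3"] unfolding eventually_sequentially by auto
    have "dist (poly_op (p0 m) S) (poly_op (p0 n) S) < e" if "m \<ge> N" "n \<ge> N" for m n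
      using norm_poly_op_diff_le[OF N[OF that(1)] N[OF that(2)]] \<open>e > 0\<close> by (simp add: dist_norm)
    then show "\<exists>M. \<forall>m\<ge>M. \<forall>n\<ge>M. dist (poly_op (p0 m) S) (poly_op (p0 n) S) < e" by blast
  qed
  then obtain T where T: "(\<lambda>n. poly_op (p0 n) S) \<longlonglongrightarrow> T"
    using blinfun_Cauchy_convergent convergent_def by blast
  have "(\<lambda>n. poly_op (p n) S) \<longlonglongrightarrow> T"
    if p: "uniform_limit (op_spectrum S) (\<lambda>n. poly (p n)) g sequentially" for p
  proof -
    have "(\<lambda>n. poly_op (p n) S - poly_op (p0 n) S) \<longlonglongrightarrow> 0"
    proof (rule tendstoI)
      fix e :: real assume "e > 0"
      then have "e/3 > 0" by simp
      from uniform_limitD[OF p this] uniform_limitD[OF p0 this]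
      show "\<forall>\<^sub>F n in sequentially. dist (poly_op (p n) S - poly_op (p0 n) S) 0 < e"
        by eventually_elim (use norm_poly_op_diff_le \<open>e > 0\<close> in fastforce)
    qed
    from tendsto_add[OF this T] show ?thesis by simp
  qed
  then show ?thesis by blast
qed

lemma cfc_tendsto:
  assumes g: "continuous_on (op_spectrum S) g"
    and p: "uniform_limit (op_spectrum S) (\<lambda>n. poly (p n)) g sequentially"
  shows "(\<lambda>n. poly_op (p n) S) \<longlonglongrightarrow> cfc g S"
proof -
  obtain T where T: "\<forall>p. uniform_limit (op_spectrum S) (\<lambda>n. poly (p n)) g sequentially
      \<longrightarrow> (\<lambda>n. poly_op (p n) S) \<longlonglongrightarrow> T"
    using cfc_exists[OF g] by blast
  have "cfc g S = T"
    unfolding cfc_eq_The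
  proof (rule the_equality)
    fix T' assume "\<forall>p. uniform_limit (op_spectrum S) (\<lambda>n. poly (p n)) g sequentially
      \<longrightarrow> (\<lambda>n. poly_op (p n) S) \<longlonglongrightarrow> T'"
    then show "T' = T" using LIMSEQ_unique T p by blast
  qed (rule T)
  then show ?thesis using T p by blast
qed

lemma cfc_unique:
  assumes "continuous_on (op_spectrum S) g"
    and "uniform_limit (op_spectrum S) (\<lambda>n. poly (p n)) g sequentially"
    and "(\<lambda>n. poly_op (p n) S) \<longlonglongrightarrow> T"
  shows "cfc g S = T"
  using LIMSEQ_unique[OF cfc_tendsto[OF assms(1,2)] assms(3)] .

lemma cfc_poly: "cfc (poly q) S = poly_op q S"
  by (rule cfc_unique[of _ "\<lambda>n. q"]) (auto intro: continuous_intros uniform_limit_const)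

lemma cfc_const: "cfc (\<lambda>t. c) S = c *\<^sub>R id_blinfun"
proof -
  have "poly [:c:] = (\<lambda>t::real. c)" by auto
  then show ?thesis using cfc_poly[of "[:c:]"] by (simp add: poly_op_const)
qed

lemma cfc_ident: "cfc (\<lambda>t. t) S = S"
proof -
  have "poly [:0, 1:] = (\<lambda>t::real. t)" by auto
  then show ?thesis using cfc_poly[of "[:0, 1:]"] by (simp add: poly_op_pCons)
qed

lemma cfc_add:
  assumes g: "continuous_on (op_spectrum S) g" and h: "continuous_on (op_spectrum S) h"
  shows "cfc (\<lambda>t. g t + h t) S = cfc g S + cfc h S"
proof -
  obtain p q where p: "uniform_limit (op_spectrum S) (\<lambda>n. poly (p n)) g sequentially"
    and q: "uniform_limit (op_spectrum S) (\<lambda>n. poly (q n)) h sequentially"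
    using poly_uniform_approx_exists[OF compact_op_spectrum] g h by metis
  have "poly (p n + q n) = (\<lambda>t. poly (p n) t + poly (q n) t)" for n by auto
  then have "uniform_limit (op_spectrum S) (\<lambda>n. poly (p n + q n)) (\<lambda>t. g t + h t) sequentially"
    using uniform_limit_add[OF p q] by simp
  moreover have "(\<lambda>n. poly_op (p n + q n) S) \<longlonglongrightarrow> cfc g S + cfc h S"
    unfolding poly_op_add by (intro tendsto_add cfc_tendsto g h p q)
  ultimately show ?thesis by (intro cfc_unique continuous_intros g h)
qed

lemma cfc_scaleR:
  assumes g: "continuous_on (op_spectrum S) g"
  shows "cfc (\<lambda>t. c * g t) S = c *\<^sub>R cfc g S"
proof -
  obtain p where p: "uniform_limit (op_spectrum S) (\<lambda>n. poly (p n)) g sequentially"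
    using poly_uniform_approx_exists[OF compact_op_spectrum g] .
  have "poly (smult c (p n)) = (\<lambda>t. c * poly (p n) t)" for n by auto
  then have "uniform_limit (op_spectrum S) (\<lambda>n. poly (smult c (p n))) (\<lambda>t. c * g t) sequentially"
    using bounded_linear.uniform_limit[OF bounded_linear_mult_right p, of c] by simp
  moreover have "(\<lambda>n. poly_op (smult c (p n)) S) \<longlonglongrightarrow> c *\<^sub>R cfc g S"
    unfolding poly_op_smult by (intro tendsto_scaleR tendsto_const cfc_tendsto g p)
  ultimately show ?thesis by (intro cfc_unique continuous_intros g)
qed

lemma cfc_diff:
  assumes g: "continuous_on (op_spectrum S) g" and h: "continuous_on (op_spectrum S) h"
  shows "cfc (\<lambda>t. g t - h t) S = cfc g S - cfc h S"
proof -
  have "continuous_on (op_spectrum S) (\<lambda>t. (-1) * h t)" by (intro continuous_intros h)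
  then show ?thesis using cfc_add[OF g, of "\<lambda>t. (-1) * h t"] cfc_scaleR[OF h, of "-1"] by simp
qed

lemma cfc_mult:
  assumes g: "continuous_on (op_spectrum S) g" and h: "continuous_on (op_spectrum S) h"
  shows "cfc (\<lambda>t. g t * h t) S = cfc g S o\<^sub>L cfc h S"
proof -
  obtain p q where p: "uniform_limit (op_spectrum S) (\<lambda>n. poly (p n)) g sequentially"
    and q: "uniform_limit (op_spectrum S) (\<lambda>n. poly (q n)) h sequentially"
    using poly_uniform_approx_exists[OF compact_op_spectrum] g h by metis
  have "bounded (g ` op_spectrum S)" "bounded (h ` op_spectrum S)"
    using compact_continuous_image[OF g compact_op_spectrum] compact_continuous_image[OF h compact_op_spectrum]
    by (simp_all add: compact_imp_bounded)
  moreover have "poly (p n * q n) = (\<lambda>t. poly (p n) t * poly (q n) t)" for n by auto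
  ultimately have "uniform_limit (op_spectrum S) (\<lambda>n. poly (p n * q n)) (\<lambda>t. g t * h t) sequentially"
    using uniform_lim_mult[OF p q] by simp
  moreover have "(\<lambda>n. poly_op (p n * q n) S) \<longlonglongrightarrow> (cfc g S o\<^sub>L cfc h S)"
    unfolding poly_op_mult
    by (rule bounded_bilinear.tendsto[OF bounded_bilinear_blinfun_compose cfc_tendsto[OF g p] cfc_tendsto[OF h q]])
  ultimately show ?thesis by (intro cfc_unique continuous_intros g h)
qed

lemma self_adjoint_cfc:
  assumes g: "continuous_on (op_spectrum S) g"
  shows "self_adjoint (cfc g S)"
proof -
  obtain p where p: "uniform_limit (op_spectrum S) (\<lambda>n. poly (p n)) g sequentially"
    using poly_uniform_approx_exists[OF compact_op_spectrum g] .
  show ?thesis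
    by (rule self_adjoint_limit[OF cfc_tendsto[OF g p]]) (simp_all add: self_adjoint_poly_op[OF sa])
qed

lemma norm_cfc_le:
  assumes g: "continuous_on (op_spectrum S) g" and "\<beta> \<ge> 0"
    and bound: "\<And>t. t \<in> op_spectrum S \<Longrightarrow> \<bar>g t\<bar> \<le> \<beta>"
  shows "norm (cfc g S) \<le> \<beta>"
proof (rule field_le_epsilon)
  fix e :: real assume "e > 0"
  obtain p where p: "uniform_limit (op_spectrum S) (\<lambda>n. poly (p n)) g sequentially"
    using poly_uniform_approx_exists[OF compact_op_spectrum g] .
  have "\<forall>\<^sub>F n in sequentially. norm (poly_op (p n) S) \<le> \<beta> + e"
    using uniform_limitD[OF p \<open>e > 0\<close>]
  proof eventually_elim
    case (elim n)
    show ?case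
    proof (rule norm_poly_op_le[OF sa])
      show "\<bar>poly (p n) t\<bar> \<le> \<beta> + e" if "t \<in> op_spectrum S" for t
        using elim bound[OF that] that by (fastforce simp: dist_real_def)
    qed (use \<open>\<beta> \<ge> 0\<close> \<open>e > 0\<close> in simp)
  qed
  then show "norm (cfc g S) \<le> \<beta> + e"
    by (rule tendsto_upperbound[OF tendsto_norm[OF cfc_tendsto[OF g p]]]) simp
qed

lemma op_spectrum_cfc:
  assumes g: "continuous_on (op_spectrum S) g"
  shows "op_spectrum (cfc g S) \<subseteq> g ` op_spectrum S"
proof
  fix \<mu> assume \<mu>: "\<mu> \<in> op_spectrum (cfc g S)"
  show "\<mu> \<in> g ` op_spectrum S"
  proof (rule ccontr)
    assume "\<mu> \<notin> g ` op_spectrum S"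
    then have nonzero: "\<And>t. t \<in> op_spectrum S \<Longrightarrow> g t - \<mu> \<noteq> 0" by force
    have g\<mu>: "continuous_on (op_spectrum S) (\<lambda>t. g t - \<mu>)" by (intro continuous_intros g)
    have inv: "continuous_on (op_spectrum S) (\<lambda>t. 1 / (g t - \<mu>))"
      using nonzero by (intro continuous_intros g) auto
    have "cfc (\<lambda>t. 1 / (g t - \<mu>) * (g t - \<mu>)) S = cfc (\<lambda>t. 1) S"
         "cfc (\<lambda>t. (g t - \<mu>) * (1 / (g t - \<mu>))) S = cfc (\<lambda>t. 1) S"
      using nonzero by (auto intro: cfc_cong)
    then have "cfc (\<lambda>t. 1 / (g t - \<mu>)) S o\<^sub>L cfc (\<lambda>t. g t - \<mu>) S = id_blinfun"
         "cfc (\<lambda>t. g t - \<mu>) S o\<^sub>L cfc (\<lambda>t. 1 / (g t - \<mu>)) S = id_blinfun"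
      by (simp_all add: cfc_const flip: cfc_mult[OF inv g\<mu>] cfc_mult[OF g\<mu> inv])
    moreover have "cfc (\<lambda>t. g t - \<mu>) S = cfc g S - \<mu> *\<^sub>R id_blinfun"
      using cfc_diff[OF g continuous_on_const] by (simp add: cfc_const)
    ultimately have "op_invertible (cfc g S - \<mu> *\<^sub>R id_blinfun)"
      unfolding op_invertible_def by auto
    then show False using \<mu> by (simp add: op_spectrum_def)
  qed
qed

end

lemma poly_op_cfc:
  fixes S :: "'a::{real_inner,complete_space} \<Rightarrow>\<^sub>L 'a"
  assumes sa: "self_adjoint S" and g: "continuous_on (op_spectrum S) g"
  shows "poly_op q (cfc g S) = cfc (\<lambda>t. poly q (g t)) S"
proof (induction q)
  case 0
  then show ?case using cfc_const[OF sa, of 0] by simp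
next
  case (pCons a q)
  have "continuous_on (op_spectrum S) (\<lambda>t. poly q (g t))"
    "continuous_on (op_spectrum S) (\<lambda>t. g t * poly q (g t))"
    by (intro continuous_intros g)+
  then have "cfc (\<lambda>t. a + g t * poly q (g t)) S = a *\<^sub>R id_blinfun + (cfc g S o\<^sub>L cfc (\<lambda>t. poly q (g t)) S)"
    by (simp add: cfc_add[OF sa continuous_on_const] cfc_const[OF sa] cfc_mult[OF sa g])
  then show ?case by (simp add: poly_op_pCons pCons.IH)
qed

lemma tendsto_cfc_uniform_limit:
  fixes S :: "'a::{real_inner,complete_space} \<Rightarrow>\<^sub>L 'a"
  assumes sa: "self_adjoint S" and G: "\<And>n. continuous_on (op_spectrum S) (G n)"
    and g: "continuous_on (op_spectrum S) g" and lim: "uniform_limit (op_spectrum S) G g sequentially"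
  shows "(\<lambda>n. cfc (G n) S) \<longlonglongrightarrow> cfc g S"
proof (rule tendstoI)
  fix e :: real assume "e > 0"
  then have "e/2 > 0" by simp
  from uniform_limitD[OF lim this]
  show "\<forall>\<^sub>F n in sequentially. dist (cfc (G n) S) (cfc g S) < e"
  proof eventually_elim
    case (elim n)
    have "norm (cfc (\<lambda>t. G n t - g t) S) \<le> e/2"
      using elim \<open>e > 0\<close> by (intro norm_cfc_le[OF sa] continuous_intros G g) (auto simp: dist_real_def)
    then show ?case using \<open>e > 0\<close> by (simp add: dist_norm cfc_diff[OF sa G g])
  qed
qed

lemma cfc_compose:
  fixes S :: "'a::{real_inner,complete_space} \<Rightarrow>\<^sub>L 'a"
  assumes sa: "self_adjoint S" and g: "continuous_on (op_spectrum S) g"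
    and h: "continuous_on (g ` op_spectrum S) h"
  shows "cfc h (cfc g S) = cfc (\<lambda>t. h (g t)) S"
proof -
  have spectrum: "op_spectrum (cfc g S) \<subseteq> g ` op_spectrum S" by (rule op_spectrum_cfc[OF sa g])
  obtain q where q: "uniform_limit (g ` op_spectrum S) (\<lambda>n. poly (q n)) h sequentially"
    using poly_uniform_approx_exists[OF compact_continuous_image[OF g compact_op_spectrum] h] .
  have hg: "continuous_on (op_spectrum S) (\<lambda>t. h (g t))"
    using continuous_on_compose[OF g h] by (simp add: o_def)
  have "(\<lambda>n. poly_op (q n) (cfc g S)) \<longlonglongrightarrow> cfc h (cfc g S)"
    using spectrum q by (intro cfc_tendsto self_adjoint_cfc[OF sa g])
      (auto intro: continuous_on_subset[OF h] uniform_limit_on_subset)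
  moreover have "(\<lambda>n. poly_op (q n) (cfc g S)) \<longlonglongrightarrow> cfc (\<lambda>t. h (g t)) S"
  proof -
    have "uniform_limit (op_spectrum S) (\<lambda>n t. poly (q n) (g t)) (\<lambda>t. h (g t)) sequentially"
      using q by (auto simp: uniform_limit_iff)
    then show ?thesis unfolding poly_op_cfc[OF sa g]
      by (intro tendsto_cfc_uniform_limit sa continuous_intros g hg)
  qed
  ultimately show ?thesis by (rule LIMSEQ_unique)
qed

lemma cfc_uniform_poly_approx:
  fixes g :: "real \<Rightarrow> real"
  assumes g: "continuous_on (cball 0 R) g" and "e > 0"
  obtains q where "\<And>T :: 'a::{real_inner,complete_space} \<Rightarrow>\<^sub>L 'a.
    self_adjoint T \<Longrightarrow> norm T \<le> R \<Longrightarrow> norm (cfc g T - poly_op q T) \<le> e"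
proof -
  obtain p where p: "uniform_limit (cball 0 R) (\<lambda>n. poly (p n)) g sequentially"
    using poly_uniform_approx_exists[OF compact_cball g] .
  obtain n where n: "\<forall>t\<in>cball 0 R. dist (poly (p n) t) (g t) < e"
    using eventually_happens'[OF sequentially_bot uniform_limitD[OF p \<open>e > 0\<close>]] by blast
  have "norm (cfc g T - poly_op (p n) T) \<le> e" if sa: "self_adjoint T" and "norm T \<le> R"
    for T :: "'a \<Rightarrow>\<^sub>L 'a"
  proof -
    have spectrum: "op_spectrum T \<subseteq> cball 0 R"
      using op_spectrum_abs_le_norm[of _ T] \<open>norm T \<le> R\<close> by force
    then have gT: "continuous_on (op_spectrum T) g" using continuous_on_subset[OF g] by blast
    have "norm (cfc (\<lambda>t. g t - poly (p n) t) T) \<le> e"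
      using n spectrum \<open>e > 0\<close>
      by (intro norm_cfc_le[OF sa] continuous_intros gT) (force simp: dist_real_def)+
    moreover have "continuous_on (op_spectrum T) (\<lambda>t. poly (p n) t)" by (intro continuous_intros)
    ultimately show ?thesis using cfc_diff[OF sa gT, of "\<lambda>t. poly (p n) t"] by (simp add: cfc_poly[OF sa])
  qed
  then show ?thesis using that by blast
qed

lemma tendsto_cfc:
  fixes X :: "'b \<Rightarrow> ('a::{real_inner,complete_space} \<Rightarrow>\<^sub>L 'a)"
  assumes g: "continuous_on UNIV g" and lim: "(X \<longlongrightarrow> S) F" and sa: "self_adjoint S"
    and saX: "\<forall>\<^sub>F n in F. self_adjoint (X n)"
  shows "((\<lambda>n. cfc g (X n)) \<longlongrightarrow> cfc g S) F"
proof (rule tendstoI)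
  fix e :: real assume "e > 0"
  \<comment> \<open>one polynomial approximates \<open>g\<close> on a ball containing the spectra of \<open>S\<close> and of all \<open>X n\<close> near \<open>S\<close>\<close>
  define R where "R = norm S + 1"
  obtain q where q: "\<And>T :: 'a \<Rightarrow>\<^sub>L 'a. self_adjoint T \<Longrightarrow> norm T \<le> R \<Longrightarrow> norm (cfc g T - poly_op q T) \<le> e/3"
    using cfc_uniform_poly_approx[OF continuous_on_subset[OF g], of R "e/3"] \<open>e > 0\<close> by auto
  have "\<forall>\<^sub>F n in F. norm (X n) < R"
    using tendsto_norm[OF lim] unfolding R_def by (rule order_tendstoD) simp
  moreover have "\<forall>\<^sub>F n in F. dist (poly_op q (X n)) (poly_op q S) < e/3"
    by (rule tendstoD[OF poly_op_tendsto[OF lim]]) (use \<open>e > 0\<close> in simp)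
  ultimately show "\<forall>\<^sub>F n in F. dist (cfc g (X n)) (cfc g S) < e"
    using saX
  proof eventually_elim
    case (elim n)
    have "dist (cfc g (X n)) (cfc g S) \<le> norm (cfc g (X n) - poly_op q (X n))
        + dist (poly_op q (X n)) (poly_op q S) + norm (cfc g S - poly_op q S)"
    proof -
      have split: "cfc g (X n) - cfc g S = (cfc g (X n) - poly_op q (X n))
          + (poly_op q (X n) - poly_op q S) - (cfc g S - poly_op q S)" (is "_ = ?u + ?v - ?w") by simp
      show ?thesis unfolding dist_norm split
        using norm_triangle_ineq4[of "?u + ?v" ?w] norm_triangle_ineq[of ?u ?v] by linarith
    qed
    moreover have "norm (cfc g (X n) - poly_op q (X n)) \<le> e/3" "norm (cfc g S - poly_op q S) \<le> e/3"
      using q elim sa by (auto simp: R_def)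
    ultimately show ?case using elim by linarith
  qed
qed

section \<open>First-order expansions at \<open>p = 0\<close>\<close>

lemma cfc_powr_eq_exp_ln:
  fixes S :: "'a::{real_inner,complete_space} \<Rightarrow>\<^sub>L 'a"
  assumes sa: "self_adjoint S" and pos: "op_spectrum S \<subseteq> {0<..}"
  shows "cfc (\<lambda>t. t powr q) S = cfc exp (q *\<^sub>R cfc ln S)"
proof -
  have ln: "continuous_on (op_spectrum S) ln" using pos by (intro continuous_intros) auto
  have "cfc (\<lambda>t. t powr q) S = cfc (\<lambda>t. exp (q * ln t)) S"
    using pos by (intro cfc_cong) (auto simp: powr_def mult.commute)
  also have "\<dots> = cfc exp (cfc (\<lambda>t. q * ln t) S)"
    by (rule cfc_compose[OF sa _ continuous_on_exp[OF continuous_on_id], symmetric])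
      (intro continuous_intros ln)
  finally show ?thesis by (simp add: cfc_scaleR[OF sa ln])
qed

lemma cfc_powr_cfc_powr:
  fixes S :: "'a::{real_inner,complete_space} \<Rightarrow>\<^sub>L 'a"
  assumes sa: "self_adjoint S" and pos: "op_spectrum S \<subseteq> {0<..}"
  shows "cfc (\<lambda>t. t powr a) (cfc (\<lambda>t. t powr b) S) = cfc (\<lambda>t. t powr (b * a)) S"
proof -
  have "cfc (\<lambda>t. t powr a) (cfc (\<lambda>t. t powr b) S) = cfc (\<lambda>t. (t powr b) powr a) S"
    using pos by (intro cfc_compose[OF sa]) (auto intro!: continuous_intros)
  also have "\<dots> = cfc (\<lambda>t. t powr (b * a)) S" by (simp add: powr_powr)
  finally show ?thesis .
qed

definition op_expansion :: "(real \<Rightarrow> ('a::real_normed_vector \<Rightarrow>\<^sub>L 'a)) \<Rightarrow> ('a \<Rightarrow>\<^sub>L 'a) \<Rightarrow> ('a \<Rightarrow>\<^sub>L 'a) \<Rightarrow> bool"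
  where "op_expansion X L D \<longleftrightarrow> ((\<lambda>p. inverse p *\<^sub>R (X p - L)) \<longlongrightarrow> D) (at 0)"

lemma op_expansion_tendsto:
  assumes "op_expansion X L D"
  shows "(X \<longlongrightarrow> L) (at 0)"
proof -
  have "((\<lambda>p. p *\<^sub>R (inverse p *\<^sub>R (X p - L)) + L) \<longlongrightarrow> 0 *\<^sub>R D + L) (at 0)"
    using assms unfolding op_expansion_def by (intro tendsto_intros)
  moreover have "\<forall>\<^sub>F p in at (0::real). p *\<^sub>R (inverse p *\<^sub>R (X p - L)) + L = X p"
    by (auto simp: eventually_at_filter)
  ultimately show ?thesis by (simp add: tendsto_cong)
qed

lemma op_expansion_eventually_near:
  assumes "op_expansion X L D" "r > 0"
  shows "\<forall>\<^sub>F p in at 0. norm (X p - L) < r"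
proof -
  have "((\<lambda>p. norm (X p - L)) \<longlongrightarrow> norm (L - L)) (at 0)"
    by (intro tendsto_intros op_expansion_tendsto[OF assms(1)])
  then show ?thesis using assms(2) by (simp add: order_tendstoD)
qed

lemma op_expansion_compose:
  assumes U: "op_expansion U L DU" and V: "op_expansion V M DV"
  shows "op_expansion (\<lambda>p. U p o\<^sub>L V p) (L o\<^sub>L M) ((DU o\<^sub>L M) + (L o\<^sub>L DV))"
proof -
  have "inverse p *\<^sub>R ((U p o\<^sub>L V p) - (L o\<^sub>L M))
      = ((inverse p *\<^sub>R (U p - L)) o\<^sub>L V p) + (L o\<^sub>L (inverse p *\<^sub>R (V p - M)))" for p
    by (simp add: blinfun_compose_simps scaleR_diff_right)
  moreover have "((\<lambda>p. ((inverse p *\<^sub>R (U p - L)) o\<^sub>L V p) + (L o\<^sub>L (inverse p *\<^sub>R (V p - M))))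
      \<longlongrightarrow> (DU o\<^sub>L M) + (L o\<^sub>L DV)) (at 0)"
    using U V op_expansion_tendsto[OF V] unfolding op_expansion_def
    by (intro tendsto_add bounded_bilinear.tendsto[OF bounded_bilinear_blinfun_compose] tendsto_const)
  ultimately show ?thesis unfolding op_expansion_def by simp
qed

lemma op_expansion_sandwich:
  assumes "op_expansion U id_blinfun DU" "op_expansion V id_blinfun DV"
  shows "op_expansion (\<lambda>p. U p o\<^sub>L V p o\<^sub>L U p) id_blinfun (DU + DV + DU)"
  using op_expansion_compose[OF op_expansion_compose[OF assms] assms(1)] by (simp add: add.assoc)

lemma norm_cfc_minus_linear_le:
  fixes T :: "'a::{real_inner,complete_space} \<Rightarrow>\<^sub>L 'a"
  assumes sa: "self_adjoint T" and g: "continuous_on (op_spectrum T) g" and "\<beta> \<ge> 0"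
    and bound: "\<And>t. t \<in> op_spectrum T \<Longrightarrow> \<bar>g t - g a - \<alpha> * (t - a)\<bar> \<le> \<beta>"
  shows "norm (cfc g T - g a *\<^sub>R id_blinfun - \<alpha> *\<^sub>R (T - a *\<^sub>R id_blinfun)) \<le> \<beta>"
proof -
  have lin: "continuous_on (op_spectrum T) (\<lambda>t. \<alpha> * (t - a))" by (intro continuous_intros)
  have "cfc (\<lambda>t. g t - g a - \<alpha> * (t - a)) T = cfc g T - g a *\<^sub>R id_blinfun - \<alpha> *\<^sub>R (T - a *\<^sub>R id_blinfun)"
    using cfc_diff[OF sa _ lin, of "\<lambda>t. g t - g a"] cfc_diff[OF sa g continuous_on_const, of "g a"]
      cfc_scaleR[OF sa, of "\<lambda>t. t - a" \<alpha>] cfc_diff[OF sa continuous_on_id continuous_on_const, of a]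
    by (simp add: continuous_intros g cfc_const[OF sa] cfc_ident[OF sa] id_def)
  moreover have "norm (cfc (\<lambda>t. g t - g a - \<alpha> * (t - a)) T) \<le> \<beta>"
    by (intro norm_cfc_le[OF sa] continuous_intros g bound \<open>\<beta> \<ge> 0\<close>)
  ultimately show ?thesis by simp
qed

lemma cfc_linearization:
  assumes deriv: "(g has_real_derivative \<alpha>) (at a)" and cont: "continuous_on (ball a r) g"
    and "r > 0" "\<epsilon> > 0"
  obtains \<delta> where "\<delta> > 0" "\<And>T :: 'a::{real_inner,complete_space} \<Rightarrow>\<^sub>L 'a.
    self_adjoint T \<Longrightarrow> norm (T - a *\<^sub>R id_blinfun) < \<delta> \<Longrightarrow>
    norm (cfc g T - g a *\<^sub>R id_blinfun - \<alpha> *\<^sub>R (T - a *\<^sub>R id_blinfun)) \<le> \<epsilon> * norm (T - a *\<^sub>R id_blinfun)"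
proof -
  obtain d where d: "d > 0" "\<And>t. \<bar>t - a\<bar> < d \<Longrightarrow> \<bar>g t - g a - \<alpha> * (t - a)\<bar> \<le> \<epsilon> * \<bar>t - a\<bar>"
    using deriv \<open>\<epsilon> > 0\<close> unfolding has_field_derivative_def has_derivative_at_alt
    by (auto simp: mult.commute)
  have "norm (cfc g T - g a *\<^sub>R id_blinfun - \<alpha> *\<^sub>R (T - a *\<^sub>R id_blinfun)) \<le> \<epsilon> * norm (T - a *\<^sub>R id_blinfun)"
    if sa: "self_adjoint T" and T: "norm (T - a *\<^sub>R id_blinfun) < min d r" for T :: "'a \<Rightarrow>\<^sub>L 'a"
  proof (rule norm_cfc_minus_linear_le[OF sa])
    have spectrum: "\<bar>t - a\<bar> \<le> norm (T - a *\<^sub>R id_blinfun)" if "t \<in> op_spectrum T" for t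
      using op_spectrum_dist_le_norm[OF that] .
    then have "op_spectrum T \<subseteq> ball a r" using T by (force simp: dist_real_def abs_minus_commute)
    then show "continuous_on (op_spectrum T) g" using continuous_on_subset[OF cont] by blast
    show "\<bar>g t - g a - \<alpha> * (t - a)\<bar> \<le> \<epsilon> * norm (T - a *\<^sub>R id_blinfun)" if "t \<in> op_spectrum T" for t
    proof -
      have "\<bar>t - a\<bar> < d" using spectrum[OF that] T by simp
      then have "\<bar>g t - g a - \<alpha> * (t - a)\<bar> \<le> \<epsilon> * \<bar>t - a\<bar>" by (rule d(2))
      also have "\<dots> \<le> \<epsilon> * norm (T - a *\<^sub>R id_blinfun)"
        using spectrum[OF that] \<open>\<epsilon> > 0\<close> by (intro mult_left_mono) auto
      finally show ?thesis .
    qed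
  qed (use \<open>\<epsilon> > 0\<close> in simp)
  then show ?thesis using that[of "min d r"] d \<open>r > 0\<close> by simp
qed

lemma op_expansion_cfc:
  assumes deriv: "(g has_real_derivative \<alpha>) (at a)" and cont: "continuous_on (ball a r) g" and "r > 0"
    and C: "op_expansion C (a *\<^sub>R id_blinfun) D"
    and sa: "\<forall>\<^sub>F p in at 0. self_adjoint (C p)"
  shows "op_expansion (\<lambda>p. cfc g (C p)) (g a *\<^sub>R id_blinfun) (\<alpha> *\<^sub>R D)"
proof -
  define Q where "Q p = inverse p *\<^sub>R (C p - a *\<^sub>R id_blinfun)" for p
  define R where "R p = cfc g (C p) - g a *\<^sub>R id_blinfun - \<alpha> *\<^sub>R (C p - a *\<^sub>R id_blinfun)" for p
  have Q: "(Q \<longlongrightarrow> D) (at 0)" using C unfolding op_expansion_def Q_def .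
  have "((\<lambda>p. inverse p *\<^sub>R R p) \<longlongrightarrow> 0) (at 0)"
  proof (rule tendstoI)
    fix e :: real assume "e > 0"
    define M where "M = norm D + 1"
    have "M > 0" unfolding M_def using norm_ge_zero[of D] by linarith
    define \<epsilon> where "\<epsilon> = e / (2 * M)"
    have "\<epsilon> > 0" "\<epsilon> * M < e" using \<open>e > 0\<close> \<open>M > 0\<close> by (simp_all add: \<epsilon>_def)
    then obtain \<delta> where "\<delta> > 0" and \<delta>: "\<And>T :: 'a \<Rightarrow>\<^sub>L 'a. self_adjoint T \<Longrightarrow> norm (T - a *\<^sub>R id_blinfun) < \<delta> \<Longrightarrow>
        norm (cfc g T - g a *\<^sub>R id_blinfun - \<alpha> *\<^sub>R (T - a *\<^sub>R id_blinfun)) \<le> \<epsilon> * norm (T - a *\<^sub>R id_blinfun)"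
      using cfc_linearization[OF deriv cont \<open>r > 0\<close>] by metis
    have "\<forall>\<^sub>F p in at 0. norm (Q p) < M"
      using tendsto_norm[OF Q] by (rule order_tendstoD) (simp add: M_def)
    with sa op_expansion_eventually_near[OF C \<open>\<delta> > 0\<close>]
    show "\<forall>\<^sub>F p in at 0. dist (inverse p *\<^sub>R R p) 0 < e"
    proof eventually_elim
      case (elim p)
      have "norm (inverse p *\<^sub>R R p) = \<bar>inverse p\<bar> * norm (R p)" by simp
      also have "\<dots> \<le> \<bar>inverse p\<bar> * (\<epsilon> * norm (C p - a *\<^sub>R id_blinfun))"
        using \<delta>[of "C p"] elim unfolding R_def by (intro mult_left_mono) auto
      also have "\<dots> = \<epsilon> * norm (Q p)" by (simp add: Q_def)
      also have "\<dots> \<le> \<epsilon> * M" using elim \<open>\<epsilon> > 0\<close> by (intro mult_left_mono) auto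
      finally show ?case using \<open>\<epsilon> * M < e\<close> by simp
    qed
  qed
  from tendsto_add[OF tendsto_scaleR[OF tendsto_const Q] this, of \<alpha>]
  show ?thesis unfolding op_expansion_def Q_def R_def by (simp add: algebra_simps)
qed

lemma op_expansion_cfc_powr:
  fixes S :: "'a::{real_inner,complete_space} \<Rightarrow>\<^sub>L 'a"
  assumes sa: "self_adjoint S" and pos: "op_spectrum S \<subseteq> {0<..}"
  shows "op_expansion (\<lambda>p. cfc (\<lambda>t. t powr (c * p)) S) id_blinfun (c *\<^sub>R cfc ln S)"
proof -
  define L where "L = cfc ln S"
  have saL: "self_adjoint L"
    unfolding L_def using pos by (intro self_adjoint_cfc[OF sa] continuous_intros) auto
  have "\<forall>\<^sub>F p in at (0::real). inverse p *\<^sub>R ((c * p) *\<^sub>R L - 0 *\<^sub>R id_blinfun) = c *\<^sub>R L"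
    by (auto simp: eventually_at_filter)
  then have "op_expansion (\<lambda>p. (c * p) *\<^sub>R L) (0 *\<^sub>R id_blinfun) (c *\<^sub>R L)"
    unfolding op_expansion_def by (rule tendsto_eventually)
  then have "op_expansion (\<lambda>p. cfc exp ((c * p) *\<^sub>R L)) (exp 0 *\<^sub>R id_blinfun) (exp 0 *\<^sub>R c *\<^sub>R L)"
    using saL by (intro op_expansion_cfc[where r = 1] DERIV_exp continuous_on_exp continuous_on_id)
      (auto intro!: always_eventually self_adjoint_scaleR)
  then show ?thesis by (simp add: cfc_powr_eq_exp_ln[OF sa pos] L_def)
qed

lemma persp_cfc_powr:
  fixes B :: "'a::{real_inner,complete_space} \<Rightarrow>\<^sub>L 'a"
  assumes sa: "self_adjoint B" and pos: "op_spectrum B \<subseteq> {0<..}"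
  shows "persp f X (cfc (\<lambda>t. t powr p) B) =
    cfc (\<lambda>t. t powr (1/2 * p)) B o\<^sub>L
      cfc f (cfc (\<lambda>t. t powr (-1/2 * p)) B o\<^sub>L X o\<^sub>L cfc (\<lambda>t. t powr (-1/2 * p)) B) o\<^sub>L
    cfc (\<lambda>t. t powr (1/2 * p)) B"
proof -
  have "cfc sqrt (cfc (\<lambda>t. t powr p) B) = cfc (\<lambda>t. t powr (1/2)) (cfc (\<lambda>t. t powr p) B)"
    using op_spectrum_cfc[OF sa, of "\<lambda>t. t powr p"] pos
    by (intro cfc_cong) (force intro!: continuous_intros simp: powr_half_sqrt)
  then show ?thesis
    unfolding persp_def using cfc_powr_cfc_powr[OF sa pos] by (simp add: mult.commute)
qed

lemma persp_cfc_powr_expansion: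
  fixes A B :: "'a::{real_inner,complete_space} \<Rightarrow>\<^sub>L 'a"
  assumes f: "(f has_real_derivative \<alpha>) (at 1)" "continuous_on {0<..} f" "f 1 = 1"
    and A: "self_adjoint A" "op_spectrum A \<subseteq> {0<..}"
    and B: "self_adjoint B" "op_spectrum B \<subseteq> {0<..}"
  defines "P \<equiv> \<lambda>p. persp f (cfc (\<lambda>t. t powr p) A) (cfc (\<lambda>t. t powr p) B)"
  shows "op_expansion P id_blinfun (\<alpha> *\<^sub>R cfc ln A + (1 - \<alpha>) *\<^sub>R cfc ln B)"
    and "\<forall>\<^sub>F p in at 0. self_adjoint (P p)"
proof -
  define Bh where "Bh p = cfc (\<lambda>t. t powr (1/2 * p)) B" for p
  define Bm where "Bm p = cfc (\<lambda>t. t powr (-1/2 * p)) B" for p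
  define C where "C p = Bm p o\<^sub>L cfc (\<lambda>t. t powr p) A o\<^sub>L Bm p" for p
  have P: "P p = Bh p o\<^sub>L cfc f (C p) o\<^sub>L Bh p" for p
    unfolding P_def Bh_def C_def Bm_def by (rule persp_cfc_powr[OF B])
  have powr_continuous: "continuous_on (op_spectrum S) (\<lambda>t. t powr q)" if "op_spectrum S \<subseteq> {0<..}" for S :: "'a \<Rightarrow>\<^sub>L 'a" and q
    using that by (intro continuous_intros) auto
  have "op_expansion (\<lambda>p. cfc (\<lambda>t. t powr p) A) id_blinfun (cfc ln A)"
    using op_expansion_cfc_powr[OF A, of 1] by simp
  then have "op_expansion C id_blinfun ((-1/2) *\<^sub>R cfc ln B + cfc ln A + (-1/2) *\<^sub>R cfc ln B)"
    unfolding C_def Bm_def by (intro op_expansion_sandwich op_expansion_cfc_powr[OF B])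
  then have C: "op_expansion C (1 *\<^sub>R id_blinfun) (cfc ln A - cfc ln B)"
    by (simp add: algebra_simps flip: scaleR_add_left)
  have saC: "self_adjoint (C p)" for p
    unfolding C_def Bm_def
    by (intro self_adjoint_sandwich self_adjoint_cfc A B powr_continuous)
  have "ball 1 1 \<subseteq> {0::real<..}" by (auto simp: dist_real_def)
  then have f_ball: "continuous_on (ball 1 1) f" using f(2) by (rule continuous_on_subset[rotated])
  have "op_expansion (\<lambda>p. cfc f (C p)) (f 1 *\<^sub>R id_blinfun) (\<alpha> *\<^sub>R (cfc ln A - cfc ln B))"
    using saC by (intro op_expansion_cfc[OF f(1) f_ball _ C]) auto
  then have "op_expansion P id_blinfun
      ((1/2) *\<^sub>R cfc ln B + \<alpha> *\<^sub>R (cfc ln A - cfc ln B) + (1/2) *\<^sub>R cfc ln B)"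
    unfolding P Bh_def using f(3) by (intro op_expansion_sandwich op_expansion_cfc_powr[OF B]) simp
  then show "op_expansion P id_blinfun (\<alpha> *\<^sub>R cfc ln A + (1 - \<alpha>) *\<^sub>R cfc ln B)"
    by (simp add: algebra_simps flip: scaleR_add_left)
  have "\<forall>\<^sub>F p in at 0. op_spectrum (C p) \<subseteq> ball 1 1"
    using op_expansion_eventually_near[OF C zero_less_one]
    by eventually_elim (use op_spectrum_subset_ball[of _ 1 1] in simp)
  then show "\<forall>\<^sub>F p in at 0. self_adjoint (P p)"
  proof eventually_elim
    case (elim p)
    then have "continuous_on (op_spectrum (C p)) f" using f_ball by (rule continuous_on_subset[rotated])
    then show ?case unfolding P Bh_def
      by (intro self_adjoint_sandwich self_adjoint_cfc B saC powr_continuous)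
  qed
qed

lemma tendsto_cfc_powr_inverse:
  fixes P :: "real \<Rightarrow> ('a::{real_inner,complete_space} \<Rightarrow>\<^sub>L 'a)"
  assumes P: "op_expansion P id_blinfun H" and saP: "\<forall>\<^sub>F p in at 0. self_adjoint (P p)"
    and saH: "self_adjoint H"
  shows "((\<lambda>p. cfc (\<lambda>t. t powr (1/p)) (P p)) \<longlongrightarrow> cfc exp H) (at 0)"
proof -
  have "op_expansion (\<lambda>p. cfc ln (P p)) (ln 1 *\<^sub>R id_blinfun) (inverse 1 *\<^sub>R H)"
    using P saP by (intro op_expansion_cfc[where r = 1] DERIV_ln) (auto intro!: continuous_intros)
  then have log: "((\<lambda>p. inverse p *\<^sub>R cfc ln (P p)) \<longlongrightarrow> H) (at 0)"
    unfolding op_expansion_def by simp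
  have "\<forall>\<^sub>F p in at 0. self_adjoint (P p) \<and> op_spectrum (P p) \<subseteq> ball 1 1"
    using saP op_expansion_eventually_near[OF P zero_less_one]
    by eventually_elim (use op_spectrum_subset_ball[of _ 1 1] in auto)
  then have exp_log: "\<forall>\<^sub>F p in at 0. self_adjoint (inverse p *\<^sub>R cfc ln (P p)) \<and>
      cfc (\<lambda>t. t powr (1/p)) (P p) = cfc exp (inverse p *\<^sub>R cfc ln (P p))"
  proof eventually_elim
    case (elim p)
    then have pos: "op_spectrum (P p) \<subseteq> {0<..}" by (auto simp: dist_real_def)
    then have "self_adjoint (cfc ln (P p))"
      using elim by (intro self_adjoint_cfc continuous_intros) auto
    then show ?case using cfc_powr_eq_exp_ln[OF _ pos] elim by (simp add: divide_inverse self_adjoint_scaleR)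
  qed
  then have "((\<lambda>p. cfc exp (inverse p *\<^sub>R cfc ln (P p))) \<longlongrightarrow> cfc exp H) (at 0)"
    using exp_log by (intro tendsto_cfc[OF continuous_on_exp[OF continuous_on_id] log saH]) (auto elim: eventually_mono)
  then show ?thesis
    by (rule tendsto_cong[THEN iffD1, rotated]) (use exp_log in \<open>auto elim: eventually_mono\<close>)
qed

theorem theorem5p1:
  fixes f f' :: "real \<Rightarrow> real"
    and A B :: "'a::{real_inner,complete_space} \<Rightarrow>\<^sub>L 'a"
  assumes f_deriv: "\<And>x. x > 0 \<Longrightarrow> (f has_real_derivative f' x) (at x)"
    and f'_cont: "continuous_on {0<..} f'"
    and f_pos: "\<And>x. x > 0 \<Longrightarrow> f x > 0"
    and f_one: "f 1 = 1"
    and A_pos: "positive_op A" and A_inv: "op_invertible A"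
    and B_pos: "positive_op B" and B_inv: "op_invertible B"
  shows "((\<lambda>p. cfc (\<lambda>t. t powr (1/p))
             (persp f (cfc (\<lambda>t. t powr p) A) (cfc (\<lambda>t. t powr p) B)))
          \<longlongrightarrow> cfc exp (f' 1 *\<^sub>R cfc ln A + (1 - f' 1) *\<^sub>R cfc ln B)) (at (0::real))"
  \<comment> \<open>only \<open>f\<close> being differentiable on \<open>(0,\<infinity>)\<close> is used\<close>
proof -
  have A: "self_adjoint A" "op_spectrum A \<subseteq> {0<..}"
    using A_pos op_spectrum_positive[OF A_pos A_inv] by (auto simp: positive_op_def)
  have B: "self_adjoint B" "op_spectrum B \<subseteq> {0<..}"
    using B_pos op_spectrum_positive[OF B_pos B_inv] by (auto simp: positive_op_def)
  have f: "(f has_real_derivative f' 1) (at 1)" "continuous_on {0<..} f"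
    using f_deriv by (auto intro: DERIV_continuous_on has_field_derivative_at_within)
  have "self_adjoint (f' 1 *\<^sub>R cfc ln A + (1 - f' 1) *\<^sub>R cfc ln B)"
    using A B by (intro self_adjoint_add self_adjoint_scaleR self_adjoint_cfc continuous_intros) auto
  with persp_cfc_powr_expansion[OF f f_one A B] show ?thesis
    by (rule tendsto_cfc_powr_inverse)
qed

end
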